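(* Let $M,n,p$ be positive integers with $n+p<M$. Let $A$ ($n\times(n+p)$), $G$ ($(M-n)\times(n+p)$), $D$ ($(M-n)\times(M-n-p)$) be real matrices with $K_0=\begin{pmatrix} A&0\\ G&D\end{pmatrix}$ invertible. For a real $n\times(M-n-p)$ matrix $B$ let $K=\begin{pmatrix} A&B\\ G&D\end{pmatrix}$ and, when $K$ is invertible, write $K^{-1}=\begin{pmatrix} E&C\\ H&F\end{pmatrix}$ with $C$ of size $(n+p)\times(M-n)$, $E$ of size $(n+p)\times n$, $H$ of size $(M-n-p)\times n$, $F$ of size $(M-n-p)\times(M-n)$. Let $L$ be a best rank-$p$ approximation of $C$ obtained by truncating a singular value decomposition of $C$ (so $\operatorname{rank}L\le p$ and $\|C-L\|=\sigma_{p+1}(C)$), and set $J=\begin{pmatrix} E&L\\ H&F\end{pmatrix}$. Then there is $\epsilon_0>0$ such that whenever $\|B\|\le\epsilon_0$: $K$ and $J$ are invertible, $J^{-1}=\begin{pmatrix} \tilde A&0\\ \tilde G&\tilde D\end{pmatrix}$ for some matrices $\tilde A$ ($n\times(n+p)$), $\tilde G$ ($(M-n)\times(n+p)$), $\tilde D$ ($(M-n)\times(M-n-p)$) (i.e. the upper-right $n\times(M-n-p)$ block of $J^{-1}$ vanishes), and $$B=A(L-C)\tilde D,\qquad A-\tilde A=A(L-C)\tilde G.$$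
   Context: $\|\cdot\|$ is the spectral norm; $\sigma_k(X)$ denotes the $k$-th largest singular value of a matrix $X$. *)

theory Defs
  imports "Jordan_Normal_Form.Matrix"
begin

definition vec_norm2 :: "real vec \<Rightarrow> real" where
  "vec_norm2 v = sqrt (v \<bullet> v)"

definition spec_norm :: "real mat \<Rightarrow> real" where
  "spec_norm B = Sup {vec_norm2 (B *\<^sub>v v) | v. v \<in> carrier_vec (dim_col B) \<and> vec_norm2 v \<le> 1}"

definition rect_diag :: "nat \<Rightarrow> nat \<Rightarrow> (nat \<Rightarrow> real) \<Rightarrow> real mat" where
  "rect_diag r c s = mat r c (\<lambda>(i,j). if i = j then s i else 0)"

definition orth_mat :: "nat \<Rightarrow> real mat \<Rightarrow> bool" where
  "orth_mat k U \<longleftrightarrow> U \<in> carrier_mat k k \<and> transpose_mat U * U = 1\<^sub>m k"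

definition trunc_svd :: "nat \<Rightarrow> real mat \<Rightarrow> real mat \<Rightarrow> bool" where
  "trunc_svd p C L \<longleftrightarrow>
    (\<exists>U V s. orth_mat (dim_row C) U \<and> orth_mat (dim_col C) V \<and>
       (\<forall>i. 0 \<le> s i) \<and>
       (\<forall>i j. i \<le> j \<longrightarrow> j < min (dim_row C) (dim_col C) \<longrightarrow> s j \<le> s i) \<and>
       C = U * rect_diag (dim_row C) (dim_col C) s * transpose_mat V \<and>
       L = U * rect_diag (dim_row C) (dim_col C) (\<lambda>i. if i < p then s i else 0) * transpose_mat V)"

end

theory Submission
  imports Defs "Jordan_Normal_Form.Determinant" "HOL-Analysis.L2_Norm"
begin

text \<open>
  Write \<open>K = [A B; G D] = K\<^sub>0 + [0 B; 0 0]\<close> with block sizes \<open>r = n + p\<close>,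
  \<open>q = M - n - p\<close> and \<open>m = M - n\<close>.  For small \<open>B\<close> the matrix \<open>K\<close> is invertible and its inverse
  \<open>X = [E C; H F]\<close> is uniformly bounded (a Neumann-type perturbation argument).  Since \<open>C D = - E B\<close>
  and \<open>D\<close> has a left inverse \<open>F\<^sub>0\<close>, the singular value \<open>\<sigma>\<^sub>p\<^sub>+\<^sub>1(C)\<close> is \<open>O(\<parallel>B\<parallel>)\<close>, while \<open>\<sigma>\<^sub>p(C)\<close> stays
  bounded below (both halves of Courant--Fischer are proved directly from the decomposition).
  Hence the truncation satisfies \<open>\<parallel>L - C\<parallel> = O(\<parallel>B\<parallel>)\<close>, and the projector onto the top \<open>p\<close> left
  singular vectors factors as \<open>C Y\<close> with \<open>Y\<close> bounded.  These give an explicit left inverse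
  \<open>[X\<^sub>1 0; W G, W D]\<close> of \<open>J = [E L; H F]\<close>, which is then two-sided; the identities
  \<open>B = A (L - C) D~\<close> and \<open>A - A~ = A (L - C) G~\<close> are the upper blocks of \<open>K (J - X) J\<^sup>-\<^sup>1 = K - J\<^sup>-\<^sup>1\<close>.
\<close>

lemma vec_norm2_L2: "vec_norm2 v = L2_set (\<lambda>i. v $ i) {0..<dim_vec v}"
  unfolding vec_norm2_def L2_set_def scalar_prod_def by (simp add: power2_eq_square)

lemma vec_norm2_nonneg: "0 \<le> vec_norm2 v"
  unfolding vec_norm2_L2 by (rule L2_set_nonneg)

lemma vec_norm2_square: "(vec_norm2 v)\<^sup>2 = (\<Sum>i\<in>{0..<dim_vec v}. (v $ i)\<^sup>2)"
  unfolding vec_norm2_L2 L2_set_def by (simp add: sum_nonneg)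

lemma vec_norm2_sum: "vec_norm2 v = sqrt (\<Sum>i\<in>{0..<dim_vec v}. (v $ i)\<^sup>2)"
  by (simp add: vec_norm2_L2 L2_set_def)

lemma vec_norm2_zero [simp]: "vec_norm2 (0\<^sub>v n) = 0"
  unfolding vec_norm2_sum by simp

lemma abs_index_le_vec_norm2: assumes "i < dim_vec v" shows "\<bar>v $ i\<bar> \<le> vec_norm2 v"
proof -
  have "(v $ i)\<^sup>2 \<le> (\<Sum>i\<in>{0..<dim_vec v}. (v $ i)\<^sup>2)" using assms by (intro member_le_sum) auto
  hence "\<bar>v $ i\<bar>\<^sup>2 \<le> (vec_norm2 v)\<^sup>2" unfolding vec_norm2_square power2_abs .
  thus ?thesis using vec_norm2_nonneg by (rule power2_le_imp_le)
qed

lemma vec_norm2_pos: assumes "v \<in> carrier_vec n" "v \<noteq> 0\<^sub>v n" shows "0 < vec_norm2 v"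
proof -
  have "\<exists>i<n. v $ i \<noteq> 0"
  proof (rule ccontr)
    assume "\<not> (\<exists>i<n. v $ i \<noteq> 0)"
    hence "v = 0\<^sub>v n" using assms(1) by (intro eq_vecI) auto
    with assms(2) show False by simp
  qed
  then obtain i where i: "i < n" "v $ i \<noteq> 0" by blast
  hence "0 < \<bar>v $ i\<bar>" by simp
  also have "\<dots> \<le> vec_norm2 v" by (rule abs_index_le_vec_norm2) (use assms i in simp)
  finally show ?thesis .
qed

lemma vec_norm2_add: assumes "dim_vec x = dim_vec y" shows "vec_norm2 (x + y) \<le> vec_norm2 x + vec_norm2 y"
proof -
  have "vec_norm2 (x + y) = L2_set (\<lambda>i. x $ i + y $ i) {0..<dim_vec y}"
    unfolding vec_norm2_L2 by (intro L2_set_cong) auto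
  also have "\<dots> \<le> L2_set (\<lambda>i. x $ i) {0..<dim_vec y} + L2_set (\<lambda>i. y $ i) {0..<dim_vec y}"
    by (rule L2_set_triangle_ineq)
  finally show ?thesis unfolding vec_norm2_L2 assms .
qed

lemma vec_norm2_uminus [simp]: "vec_norm2 (- x) = vec_norm2 x"
  unfolding vec_norm2_sum by simp

lemma vec_norm2_minus: assumes "dim_vec x = dim_vec y" shows "vec_norm2 (x - y) \<le> vec_norm2 x + vec_norm2 y"
proof -
  have "x - y = x + (- y)" using assms by (intro eq_vecI) auto
  thus ?thesis using vec_norm2_add[of x "- y"] assms by simp
qed

lemma vec_norm2_smult: "vec_norm2 (a \<cdot>\<^sub>v x) = \<bar>a\<bar> * vec_norm2 x"
proof -
  have "(\<Sum>i\<in>{0..<dim_vec (a \<cdot>\<^sub>v x)}. ((a \<cdot>\<^sub>v x) $ i)\<^sup>2) = (\<Sum>i\<in>{0..<dim_vec x}. a\<^sup>2 * (x $ i)\<^sup>2)"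
    by (rule sum.cong) (auto simp: power_mult_distrib)
  also have "\<dots> = a\<^sup>2 * (\<Sum>i\<in>{0..<dim_vec x}. (x $ i)\<^sup>2)" by (rule sum_distrib_left[symmetric])
  finally show ?thesis unfolding vec_norm2_sum by (simp add: real_sqrt_mult)
qed

lemma vec_norm2_unit: assumes "j < n" shows "vec_norm2 (unit_vec n j :: real vec) = 1"
proof -
  have "(\<Sum>i\<in>{0..<n}. ((unit_vec n j :: real vec) $ i)\<^sup>2) = (\<Sum>i\<in>{0..<n}. if i = j then 1 else 0)"
    using assms by (intro sum.cong) auto
  also have "\<dots> = 1" using assms by simp
  finally show ?thesis unfolding vec_norm2_sum by simp
qed

section \<open>Operator bounds\<close>

text \<open>This predicate is the working notion of size throughout.\<close>

definition op_bound :: "real mat \<Rightarrow> real \<Rightarrow> bool" where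
  "op_bound X c \<longleftrightarrow> (\<forall>x \<in> carrier_vec (dim_col X). vec_norm2 (X *\<^sub>v x) \<le> c * vec_norm2 x)"

lemma mult_mat_vec_zero [simp]: "A \<in> carrier_mat r c \<Longrightarrow> A *\<^sub>v 0\<^sub>v c = (0\<^sub>v r :: real vec)"
  by (intro eq_vecI) auto

lemma op_boundD: "op_bound X c \<Longrightarrow> x \<in> carrier_vec (dim_col X) \<Longrightarrow> vec_norm2 (X *\<^sub>v x) \<le> c * vec_norm2 x"
  unfolding op_bound_def by auto

lemma op_bound_mono: "op_bound X c \<Longrightarrow> c \<le> d \<Longrightarrow> op_bound X d"
  unfolding op_bound_def by (meson vec_norm2_nonneg mult_right_mono order_trans)

lemma op_bound_mult:
  assumes "op_bound X a" "op_bound Y b" "X \<in> carrier_mat r k" "Y \<in> carrier_mat k c" "0 \<le> a"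
  shows "op_bound (X * Y) (a * b)"
  unfolding op_bound_def
proof
  fix x :: "real vec" assume "x \<in> carrier_vec (dim_col (X * Y))"
  hence x: "x \<in> carrier_vec c" using assms by auto
  have "vec_norm2 ((X * Y) *\<^sub>v x) = vec_norm2 (X *\<^sub>v (Y *\<^sub>v x))" using assms x by auto
  also have "\<dots> \<le> a * vec_norm2 (Y *\<^sub>v x)" using op_boundD[OF assms(1), of "Y *\<^sub>v x"] assms x by auto
  also have "\<dots> \<le> a * (b * vec_norm2 x)" using op_boundD[OF assms(2), of x] assms x by (intro mult_left_mono) auto
  finally show "vec_norm2 ((X * Y) *\<^sub>v x) \<le> a * b * vec_norm2 x" by simp
qed

lemma op_bound_add:
  assumes "op_bound X a" "op_bound Y b" "X \<in> carrier_mat r c" "Y \<in> carrier_mat r c"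
  shows "op_bound (X + Y) (a + b)"
  unfolding op_bound_def
proof
  fix x :: "real vec" assume "x \<in> carrier_vec (dim_col (X + Y))"
  hence x: "x \<in> carrier_vec c" using assms by auto
  have "vec_norm2 ((X + Y) *\<^sub>v x) = vec_norm2 (X *\<^sub>v x + Y *\<^sub>v x)"
    using assms x by (metis add_mult_distrib_mat_vec)
  also have "\<dots> \<le> vec_norm2 (X *\<^sub>v x) + vec_norm2 (Y *\<^sub>v x)" using assms by (intro vec_norm2_add) auto
  also have "\<dots> \<le> a * vec_norm2 x + b * vec_norm2 x"
    using op_boundD[OF assms(1), of x] op_boundD[OF assms(2), of x] assms x by (intro add_mono) auto
  finally show "vec_norm2 ((X + Y) *\<^sub>v x) \<le> (a + b) * vec_norm2 x" by (simp add: algebra_simps)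
qed

lemma op_bound_uminus: assumes "op_bound X a" shows "op_bound (- X) a"
  unfolding op_bound_def
proof
  fix x :: "real vec" assume "x \<in> carrier_vec (dim_col (- X))"
  hence x: "x \<in> carrier_vec (dim_col X)" by simp
  hence "(- X) *\<^sub>v x = - (X *\<^sub>v x)" by (intro uminus_mult_mat_vec) simp
  thus "vec_norm2 ((- X) *\<^sub>v x) \<le> a * vec_norm2 x" using op_boundD[OF assms x] by simp
qed

lemma op_bound_minus:
  assumes "op_bound X a" "op_bound Y b" "X \<in> carrier_mat r c" "Y \<in> carrier_mat r c"
  shows "op_bound (X - Y) (a + b)"
proof -
  have "X - Y = X + (- Y)" by (rule minus_add_uminus_mat[OF assms(3,4)])
  thus ?thesis using op_bound_add[OF assms(1) op_bound_uminus[OF assms(2)] assms(3)] assms(4) by simp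
qed

lemma op_bound_sum_abs: "op_bound X (\<Sum>i\<in>{0..<dim_row X}. \<Sum>j\<in>{0..<dim_col X}. \<bar>X $$ (i,j)\<bar>)"
  unfolding op_bound_def
proof
  fix x :: "real vec" assume x: "x \<in> carrier_vec (dim_col X)"
  have "vec_norm2 (X *\<^sub>v x) \<le> (\<Sum>i\<in>{0..<dim_row X}. \<bar>(X *\<^sub>v x) $ i\<bar>)"
    unfolding vec_norm2_L2 dim_mult_mat_vec by (rule L2_set_le_sum_abs)
  also have "\<dots> \<le> (\<Sum>i\<in>{0..<dim_row X}. \<Sum>j\<in>{0..<dim_col X}. \<bar>X $$ (i,j)\<bar> * vec_norm2 x)"
  proof (rule sum_mono)
    fix i assume i: "i \<in> {0..<dim_row X}"
    have "(X *\<^sub>v x) $ i = row X i \<bullet> x" using i by simp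
    also have "\<dots> = (\<Sum>j\<in>{0..<dim_col X}. X $$ (i,j) * x $ j)"
      using i x unfolding scalar_prod_def by (intro sum.cong) auto
    finally have "(X *\<^sub>v x) $ i = (\<Sum>j\<in>{0..<dim_col X}. X $$ (i,j) * x $ j)" .
    hence "\<bar>(X *\<^sub>v x) $ i\<bar> \<le> (\<Sum>j\<in>{0..<dim_col X}. \<bar>X $$ (i,j) * x $ j\<bar>)"
      by (simp add: sum_abs)
    also have "\<dots> \<le> (\<Sum>j\<in>{0..<dim_col X}. \<bar>X $$ (i,j)\<bar> * vec_norm2 x)"
      using x abs_index_le_vec_norm2[of _ x] by (intro sum_mono) (auto simp: abs_mult intro: mult_left_mono)
    finally show "\<bar>(X *\<^sub>v x) $ i\<bar> \<le> (\<Sum>j\<in>{0..<dim_col X}. \<bar>X $$ (i,j)\<bar> * vec_norm2 x)" .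
  qed
  finally show "vec_norm2 (X *\<^sub>v x) \<le> (\<Sum>i\<in>{0..<dim_row X}. \<Sum>j\<in>{0..<dim_col X}. \<bar>X $$ (i,j)\<bar>) * vec_norm2 x"
    by (simp add: sum_distrib_right)
qed

lemma op_bound_exists: "\<exists>c\<ge>0. op_bound X c"
  using op_bound_sum_abs[of X] sum_nonneg by (metis (no_types, lifting) abs_ge_zero)

lemma op_bound_entries:
  assumes "X \<in> carrier_mat r c" "\<And>i j. i < r \<Longrightarrow> j < c \<Longrightarrow> \<bar>X $$ (i,j)\<bar> \<le> k"
  shows "op_bound X (real r * real c * k)"
proof -
  have "(\<Sum>i\<in>{0..<r}. \<Sum>j\<in>{0..<c}. \<bar>X $$ (i,j)\<bar>) \<le> (\<Sum>i\<in>{0..<r}. \<Sum>j\<in>{0..<c}. k)"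
    by (intro sum_mono) (simp add: assms(2))
  also have "\<dots> = real r * real c * k" by simp
  finally have le: "(\<Sum>i\<in>{0..<r}. \<Sum>j\<in>{0..<c}. \<bar>X $$ (i,j)\<bar>) \<le> real r * real c * k" .
  have dims: "dim_row X = r" "dim_col X = c" using assms(1) by auto
  show ?thesis using op_bound_mono[OF op_bound_sum_abs[of X, unfolded dims] le] .
qed

lemma abs_entry_le_op_bound: assumes "op_bound X k" "i < dim_row X" "j < dim_col X"
  shows "\<bar>X $$ (i,j)\<bar> \<le> k"
proof -
  define e where "e = (unit_vec (dim_col X) j :: real vec)"
  have e: "e \<in> carrier_vec (dim_col X)" unfolding e_def by simp
  have "\<bar>X $$ (i,j)\<bar> = \<bar>(X *\<^sub>v e) $ i\<bar>" unfolding e_def using assms(2,3) by simp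
  also have "\<dots> \<le> vec_norm2 (X *\<^sub>v e)" using assms(2) by (intro abs_index_le_vec_norm2) simp
  also have "\<dots> \<le> k * vec_norm2 e" using op_boundD[OF assms(1) e] .
  also have "vec_norm2 e = 1" unfolding e_def by (rule vec_norm2_unit[OF assms(3)])
  finally show ?thesis by simp
qed

lemma op_bound_spec_norm: "op_bound B (spec_norm B)"
  unfolding op_bound_def
proof
  let ?S = "{vec_norm2 (B *\<^sub>v v) | v. v \<in> carrier_vec (dim_col B) \<and> vec_norm2 v \<le> 1}"
  obtain k where k: "0 \<le> k" "op_bound B k" using op_bound_exists by blast
  have bdd: "bdd_above ?S"
  proof (rule bdd_aboveI)
    fix y assume "y \<in> ?S"
    then obtain v where v: "y = vec_norm2 (B *\<^sub>v v)" "v \<in> carrier_vec (dim_col B)" "vec_norm2 v \<le> 1" by auto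
    have "y \<le> k * vec_norm2 v" using op_boundD[OF k(2) v(2)] v(1) by simp
    also have "\<dots> \<le> k" using v(3) k(1) by (simp add: mult_left_le)
    finally show "y \<le> k" .
  qed
  fix x :: "real vec" assume x: "x \<in> carrier_vec (dim_col B)"
  show "vec_norm2 (B *\<^sub>v x) \<le> spec_norm B * vec_norm2 x"
  proof (cases "vec_norm2 x = 0")
    case True
    hence "(B *\<^sub>v x) = 0\<^sub>v (dim_row B)"
      using x vec_norm2_pos[OF x] by (cases "x = 0\<^sub>v (dim_col B)") (auto intro!: eq_vecI)
    thus ?thesis using True by simp
  next
    case False
    hence pos: "0 < vec_norm2 x" using vec_norm2_nonneg[of x] by simp
    define u where "u = (1 / vec_norm2 x) \<cdot>\<^sub>v x"
    have u: "u \<in> carrier_vec (dim_col B)" "vec_norm2 u = 1"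
      unfolding u_def using x pos by (auto simp: vec_norm2_smult)
    have "B *\<^sub>v u = (1 / vec_norm2 x) \<cdot>\<^sub>v (B *\<^sub>v x)"
      unfolding u_def by (rule mult_mat_vec[OF carrier_matI[OF refl refl] x])
    hence "vec_norm2 (B *\<^sub>v x) / vec_norm2 x = vec_norm2 (B *\<^sub>v u)"
      using pos by (simp add: vec_norm2_smult)
    also have "\<dots> \<le> spec_norm B" unfolding spec_norm_def by (rule cSup_upper[OF _ bdd]) (use u in auto)
    finally show ?thesis using pos by (simp add: divide_le_eq mult.commute)
  qed
qed

lemma orth_mat_carrier: "orth_mat k U \<Longrightarrow> U \<in> carrier_mat k k"
  unfolding orth_mat_def by simp

lemma orth_mat_left_inverse: "orth_mat k U \<Longrightarrow> transpose_mat U * U = 1\<^sub>m k"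
  unfolding orth_mat_def by simp

lemma orth_mat_right_inverse: assumes "orth_mat k U" shows "U * transpose_mat U = 1\<^sub>m k"
  using mat_mult_left_right_inverse[OF _ orth_mat_carrier orth_mat_left_inverse] assms
  by (metis orth_mat_carrier transpose_carrier_mat)

lemma orth_mat_transpose: "orth_mat k U \<Longrightarrow> orth_mat k (transpose_mat U)"
  using orth_mat_right_inverse orth_mat_carrier unfolding orth_mat_def by simp

lemma orth_mat_isometry: assumes "orth_mat k U" "x \<in> carrier_vec k"
  shows "vec_norm2 (U *\<^sub>v x) = vec_norm2 x"
proof -
  have U: "U \<in> carrier_mat k k" using assms(1) by (rule orth_mat_carrier)
  have "transpose_mat U *\<^sub>v (U *\<^sub>v x) = (transpose_mat U * U) *\<^sub>v x"
    using U assms(2) by (metis assoc_mult_mat_vec transpose_carrier_mat)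
  hence "transpose_mat U *\<^sub>v (U *\<^sub>v x) = x" using orth_mat_left_inverse[OF assms(1)] assms(2) by simp
  moreover have "(transpose_mat U *\<^sub>v (U *\<^sub>v x)) \<bullet> x = (U *\<^sub>v x) \<bullet> (U *\<^sub>v x)"
    using U assms(2) by (intro transpose_vec_mult_scalar) auto
  ultimately show ?thesis unfolding vec_norm2_def by simp
qed

lemma orth_mat_op_bound: assumes "orth_mat k U" shows "op_bound U 1"
  unfolding op_bound_def using orth_mat_isometry[OF assms] orth_mat_carrier[OF assms] by simp

lemma op_bound_orth_sandwich:
  assumes P: "orth_mat a P" and Q: "orth_mat b Q" and S: "S \<in> carrier_mat a b"
    and bS: "op_bound S c" and c: "0 \<le> c"
  shows "op_bound (P * S * transpose_mat Q) c"
proof -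
  have "op_bound (P * S) (1 * c)"
    by (rule op_bound_mult[OF orth_mat_op_bound[OF P] bS orth_mat_carrier[OF P] S]) simp
  hence "op_bound (P * S * transpose_mat Q) (1 * c * 1)"
    by (rule op_bound_mult[OF _ orth_mat_op_bound[OF orth_mat_transpose[OF Q]]])
      (use orth_mat_carrier[OF P] orth_mat_carrier[OF Q] S c in auto)
  thus ?thesis by simp
qed

text \<open>The proof uses \<open>\<parallel>x\<parallel> \<le> 2\<parallel>(1 + X) x\<parallel>\<close>.\<close>

lemma inverse_near_identity:
  assumes X: "X \<in> carrier_mat k k" and b: "op_bound X c" and c: "c \<le> 1/2"
  obtains Y where "Y \<in> carrier_mat k k" "(1\<^sub>m k + X) * Y = 1\<^sub>m k" "Y * (1\<^sub>m k + X) = 1\<^sub>m k" "op_bound Y 2"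
proof -
  define N where "N = 1\<^sub>m k + X"
  have N: "N \<in> carrier_mat k k" unfolding N_def using X by simp
  have lower: "vec_norm2 x \<le> 2 * vec_norm2 (N *\<^sub>v x)" if x: "x \<in> carrier_vec k" for x
  proof -
    have "N *\<^sub>v x = x + X *\<^sub>v x" unfolding N_def using add_mult_distrib_mat_vec[OF one_carrier_mat X x] x by simp
    hence "x = N *\<^sub>v x - X *\<^sub>v x" using x X by (intro eq_vecI) auto
    hence "vec_norm2 x \<le> vec_norm2 (N *\<^sub>v x) + vec_norm2 (X *\<^sub>v x)"
      using vec_norm2_minus[of "N *\<^sub>v x" "X *\<^sub>v x"] N X by (metis dim_mult_mat_vec carrier_matD(1))
    also have "vec_norm2 (X *\<^sub>v x) \<le> c * vec_norm2 x" using op_boundD[OF b] x X by simp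
    also have "c * vec_norm2 x \<le> 1/2 * vec_norm2 x" using c vec_norm2_nonneg[of x] by (intro mult_right_mono) auto
    finally show ?thesis by simp
  qed
  have "det N \<noteq> 0"
  proof
    assume "det N = 0"
    then obtain v where v: "v \<in> carrier_vec k" "v \<noteq> 0\<^sub>v k" "N *\<^sub>v v = 0\<^sub>v k"
      using det_0_iff_vec_prod_zero[OF N] by auto
    have "vec_norm2 v \<le> 0" using lower[OF v(1)] v(3) by simp
    thus False using vec_norm2_pos[OF v(1,2)] by simp
  qed
  from det_non_zero_imp_unit[OF N this, of "()"]
  obtain Y where Y: "Y \<in> carrier_mat k k" "Y * N = 1\<^sub>m k" "N * Y = 1\<^sub>m k"
    unfolding Units_def ring_mat_simps by auto
  have "op_bound Y 2" unfolding op_bound_def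
  proof
    fix y :: "real vec" assume "y \<in> carrier_vec (dim_col Y)"
    hence y: "y \<in> carrier_vec k" using Y by simp
    have "N *\<^sub>v (Y *\<^sub>v y) = (N * Y) *\<^sub>v y" using N Y y by (metis assoc_mult_mat_vec)
    hence "N *\<^sub>v (Y *\<^sub>v y) = y" using Y y by simp
    thus "vec_norm2 (Y *\<^sub>v y) \<le> 2 * vec_norm2 y" using lower[of "Y *\<^sub>v y"] Y y by simp
  qed
  thus ?thesis using that Y unfolding N_def by blast
qed

lemma common_null_vector:
  assumes f: "\<And>i. i < k \<Longrightarrow> f i \<in> carrier_vec c" and kc: "k < c"
  obtains v where "v \<in> carrier_vec c" "v \<noteq> 0\<^sub>v c" "\<And>i. i < k \<Longrightarrow> f i \<bullet> v = (0::real)"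
proof -
  define g where "g = (\<lambda>i. if i < k then f i else 0\<^sub>v c)"
  define X where "X = mat\<^sub>r c c (\<lambda>i. if i = c - 1 then 0\<^sub>v c else g i)"
  have X: "X \<in> carrier_mat c c" unfolding X_def by simp
  have g: "g \<in> {0..<c} \<rightarrow> carrier_vec c" unfolding g_def using f by auto
  have "det X = 0" unfolding X_def by (rule det_row_0[OF _ g]) (use kc in simp)
  then obtain v where v: "v \<in> carrier_vec c" "v \<noteq> 0\<^sub>v c" "X *\<^sub>v v = 0\<^sub>v c"
    using det_0_iff_vec_prod_zero[OF X] by auto
  have "f i \<bullet> v = 0" if i: "i < k" for i
  proof -
    have "row X i = f i" unfolding X_def g_def using i kc f by (subst row_mat_of_row_fun) auto
    hence "f i \<bullet> v = (X *\<^sub>v v) $ i" using i kc X by simp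
    thus ?thesis using v(3) i kc by simp
  qed
  thus ?thesis using that v by blast
qed

lemma invertible_matI:
  fixes K :: "real mat"
  assumes "K \<in> carrier_mat N N" "Ki \<in> carrier_mat N N" "Ki * K = 1\<^sub>m N"
  shows "invertible_mat K"
  using assms mat_mult_left_right_inverse[OF assms(2,1,3)]
  unfolding invertible_mat_def inverts_mat_def square_mat.simps by auto

lemma invertible_matE:
  assumes "invertible_mat K" "K \<in> carrier_mat N N"
  obtains Ki where "Ki \<in> carrier_mat N N" "K * Ki = 1\<^sub>m N" "Ki * K = 1\<^sub>m N"
proof -
  obtain Ki where KKi: "K * Ki = 1\<^sub>m N" and KiK: "Ki * K = 1\<^sub>m (dim_row Ki)"
    using assms unfolding invertible_mat_def inverts_mat_def by auto
  have "dim_col Ki = N" "dim_row Ki = N"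
    using arg_cong[OF KKi, of dim_col] arg_cong[OF KiK, of dim_col] assms(2) by auto
  thus ?thesis using that KKi KiK by auto
qed

text \<open>Associativity in terms of dimensions; unlike the library version with carrier premises,
  the simplifier can discharge its side conditions using the dimension rules.\<close>

lemma mult_assoc_dim: fixes A :: "real mat"
  shows "dim_col A = dim_row B \<Longrightarrow> dim_col B = dim_row C \<Longrightarrow> (A * B) * C = A * (B * C)"
  by (rule assoc_mult_mat[OF carrier_matI[OF refl refl] carrier_matI[OF _ refl] carrier_matI[OF _ refl]]) auto

lemma mult_mat_vec_assoc_dim: fixes A :: "real mat"
  shows "dim_col A = dim_row B \<Longrightarrow> dim_col B = dim_vec v \<Longrightarrow> (A * B) *\<^sub>v v = A *\<^sub>v (B *\<^sub>v v)"
  by (rule assoc_mult_mat_vec[OF carrier_matI[OF refl refl] carrier_matI[OF _ refl] carrier_vecI]) auto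

section \<open>Block matrices\<close>

lemma four_block_mat_inject:
  assumes "A \<in> carrier_mat nr1 nc1" "B \<in> carrier_mat nr1 nc2" "C \<in> carrier_mat nr2 nc1" "D \<in> carrier_mat nr2 nc2"
    "A' \<in> carrier_mat nr1 nc1" "B' \<in> carrier_mat nr1 nc2" "C' \<in> carrier_mat nr2 nc1" "D' \<in> carrier_mat nr2 nc2"
    and eq: "four_block_mat A B C D = four_block_mat A' B' C' D'"
  shows "A = A'" "B = B'" "C = C'" "D = D'"
proof -
  have e: "four_block_mat A B C D $$ (i,j) = four_block_mat A' B' C' D' $$ (i,j)" for i j
    using eq by simp
  show "A = A'"
  proof (rule eq_matI)
    fix i j assume "i < dim_row A'" "j < dim_col A'"
    thus "A $$ (i,j) = A' $$ (i,j)" using e[of i j] assms(1-8) by simp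
  qed (use assms in auto)
  show "B = B'"
  proof (rule eq_matI)
    fix i j assume "i < dim_row B'" "j < dim_col B'"
    thus "B $$ (i,j) = B' $$ (i,j)" using e[of i "j + nc1"] assms(1-8) by simp
  qed (use assms in auto)
  show "C = C'"
  proof (rule eq_matI)
    fix i j assume "i < dim_row C'" "j < dim_col C'"
    thus "C $$ (i,j) = C' $$ (i,j)" using e[of "i + nr1" j] assms(1-8) by simp
  qed (use assms in auto)
  show "D = D'"
  proof (rule eq_matI)
    fix i j assume "i < dim_row D'" "j < dim_col D'"
    thus "D $$ (i,j) = D' $$ (i,j)" using e[of "i + nr1" "j + nc1"] assms(1-8) by simp
  qed (use assms in auto)
qed

lemma mat_add_eq_imp_eq_minus:
  fixes X Y Z :: "real mat"
  assumes "X \<in> carrier_mat a b" "Y \<in> carrier_mat a b" "X + Y = Z"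
  shows "X = Z - Y"
proof -
  have e: "X $$ (i,j) + Y $$ (i,j) = Z $$ (i,j)" if "i < a" "j < b" for i j
    using arg_cong[OF assms(3), of "\<lambda>M. M $$ (i,j)"] that assms(1,2) by simp
  show ?thesis by (rule eq_matI) (use e assms in \<open>auto simp: algebra_simps\<close>)
qed

lemma mat_add_eq_zero_imp_eq_uminus:
  fixes X Y :: "real mat"
  assumes "X \<in> carrier_mat a b" "Y \<in> carrier_mat a b" "X + Y = 0\<^sub>m a b"
  shows "X = - Y" "Y = - X"
proof -
  have e: "X $$ (i,j) + Y $$ (i,j) = 0" if "i < a" "j < b" for i j
    using arg_cong[OF assms(3), of "\<lambda>M. M $$ (i,j)"] that assms(1,2) by simp
  show "X = - Y" by (rule eq_matI) (use e assms(1,2) in \<open>auto simp: eq_neg_iff_add_eq_0\<close>)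
  show "Y = - X" by (rule eq_matI) (use e assms(1,2) in \<open>auto simp: eq_neg_iff_add_eq_0 add.commute\<close>)
qed

lemma four_block_mult_one:
  assumes "A \<in> carrier_mat n1 k1" "B \<in> carrier_mat n1 k2" "C \<in> carrier_mat n2 k1" "D \<in> carrier_mat n2 k2"
    "E \<in> carrier_mat k1 n1" "F \<in> carrier_mat k1 n2" "G \<in> carrier_mat k2 n1" "H \<in> carrier_mat k2 n2"
    and N: "N = n1 + n2"
    and one: "four_block_mat A B C D * four_block_mat E F G H = 1\<^sub>m N"
  shows "A * E + B * G = 1\<^sub>m n1" "A * F + B * H = 0\<^sub>m n1 n2"
    "C * E + D * G = 0\<^sub>m n2 n1" "C * F + D * H = 1\<^sub>m n2"
proof -
  have eq: "four_block_mat (A * E + B * G) (A * F + B * H) (C * E + D * G) (C * F + D * H)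
      = four_block_mat (1\<^sub>m n1) (0\<^sub>m n1 n2) (0\<^sub>m n2 n1) (1\<^sub>m n2)"
    using one unfolding mult_four_block_mat[OF assms(1-8)] N four_block_one_mat[symmetric] .
  have "A * E + B * G \<in> carrier_mat n1 n1" "A * F + B * H \<in> carrier_mat n1 n2"
    "C * E + D * G \<in> carrier_mat n2 n1" "C * F + D * H \<in> carrier_mat n2 n2"
    using assms(1-8) by auto
  from four_block_mat_inject[OF this one_carrier_mat zero_carrier_mat zero_carrier_mat one_carrier_mat eq]
  show "A * E + B * G = 1\<^sub>m n1" "A * F + B * H = 0\<^sub>m n1 n2"
    "C * E + D * G = 0\<^sub>m n2 n1" "C * F + D * H = 1\<^sub>m n2" .
qed

lemma op_bound_four_block_parts:
  assumes "A \<in> carrier_mat nr1 nc1" "B \<in> carrier_mat nr1 nc2" "C \<in> carrier_mat nr2 nc1" "D \<in> carrier_mat nr2 nc2"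
    and b: "op_bound (four_block_mat A B C D) k"
  shows "op_bound A (real nr1 * real nc1 * k)" "op_bound C (real nr2 * real nc1 * k)"
    "op_bound D (real nr2 * real nc2 * k)"
proof -
  let ?X = "four_block_mat A B C D"
  have entry: "\<bar>?X $$ (i,j)\<bar> \<le> k" if "i < nr1 + nr2" "j < nc1 + nc2" for i j
    using abs_entry_le_op_bound[OF b] that assms(1-4) by simp
  show "op_bound A (real nr1 * real nc1 * k)"
  proof (rule op_bound_entries[OF assms(1)])
    fix i j assume "i < nr1" "j < nc1"
    thus "\<bar>A $$ (i,j)\<bar> \<le> k" using entry[of i j] assms(1-4) by simp
  qed
  show "op_bound C (real nr2 * real nc1 * k)"
  proof (rule op_bound_entries[OF assms(3)])
    fix i j assume "i < nr2" "j < nc1"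
    thus "\<bar>C $$ (i,j)\<bar> \<le> k" using entry[of "i + nr1" j] assms(1-4) by simp
  qed
  show "op_bound D (real nr2 * real nc2 * k)"
  proof (rule op_bound_entries[OF assms(4)])
    fix i j assume "i < nr2" "j < nc2"
    thus "\<bar>D $$ (i,j)\<bar> \<le> k" using entry[of "i + nr1" "j + nc1"] assms(1-4) by simp
  qed
qed

lemma rect_diag_carrier [simp]: "rect_diag r c s \<in> carrier_mat r c"
  unfolding rect_diag_def by simp

lemma dim_rect_diag [simp]: "dim_row (rect_diag r c s) = r" "dim_col (rect_diag r c s) = c"
  unfolding rect_diag_def by simp_all

lemma index_rect_diag [simp]: "i < r \<Longrightarrow> j < c \<Longrightarrow> rect_diag r c s $$ (i,j) = (if i = j then s i else 0)"
  unfolding rect_diag_def by simp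

lemma rect_diag_cong: "(\<And>i. i < r \<Longrightarrow> i < c \<Longrightarrow> f i = g i) \<Longrightarrow> rect_diag r c f = rect_diag r c g"
  by (rule eq_matI) auto

lemma rect_diag_minus: "rect_diag r c f - rect_diag r c g = rect_diag r c (\<lambda>i. f i - g i)"
  by (rule eq_matI) auto

lemma row_rect_diag: "i < r \<Longrightarrow> row (rect_diag r c s) i = vec c (\<lambda>j. if i = j then s i else 0)"
  by (intro eq_vecI) auto

lemma col_rect_diag: "j < c \<Longrightarrow> col (rect_diag r c s) j = vec r (\<lambda>i. if i = j then s i else 0)"
  by (intro eq_vecI) auto

lemma rect_diag_mult: "rect_diag a b s * rect_diag b c t = rect_diag a c (\<lambda>i. if i < b then s i * t i else 0)"
proof (rule eq_matI)
  fix i j assume "i < dim_row (rect_diag a c (\<lambda>i. if i < b then s i * t i else 0))"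
    "j < dim_col (rect_diag a c (\<lambda>i. if i < b then s i * t i else 0))"
  hence i: "i < a" and j: "j < c" by auto
  have "(rect_diag a b s * rect_diag b c t) $$ (i,j) = row (rect_diag a b s) i \<bullet> col (rect_diag b c t) j"
    using i j by simp
  also have "\<dots> = (\<Sum>k\<in>{0..<b}. (if k = i then (if i = j then s i * t i else 0) else 0))"
    unfolding row_rect_diag[OF i] col_rect_diag[OF j] scalar_prod_def by (intro sum.cong) auto
  also have "\<dots> = rect_diag a c (\<lambda>i. if i < b then s i * t i else 0) $$ (i,j)"
    using i j by (simp add: sum.delta)
  finally show "(rect_diag a b s * rect_diag b c t) $$ (i,j) = rect_diag a c (\<lambda>i. if i < b then s i * t i else 0) $$ (i,j)" .
qed auto

lemma rect_diag_mult_vec: assumes y: "y \<in> carrier_vec c"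
  shows "rect_diag r c s *\<^sub>v y = vec r (\<lambda>i. if i < c then s i * y $ i else 0)"
proof (rule eq_vecI)
  fix i assume "i < dim_vec (vec r (\<lambda>i. if i < c then s i * y $ i else 0))"
  hence i: "i < r" by simp
  have "(rect_diag r c s *\<^sub>v y) $ i = row (rect_diag r c s) i \<bullet> y" using i by simp
  also have "\<dots> = (\<Sum>j\<in>{0..<c}. (if j = i then s i * y $ j else 0))"
    unfolding row_rect_diag[OF i] scalar_prod_def using y by (intro sum.cong) auto
  finally show "(rect_diag r c s *\<^sub>v y) $ i = vec r (\<lambda>i. if i < c then s i * y $ i else 0) $ i"
    using i by (simp add: sum.delta)
qed simp

lemma sum_if_less: "(\<Sum>i\<in>{0..<(r::nat)}. if i < c then f i else 0) = (\<Sum>i\<in>{0..<min r c}. f i)"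
proof -
  have "(\<Sum>i\<in>{0..<r}. if i < c then f i else 0) = (\<Sum>i\<in>{i \<in> {0..<r}. i < c}. f i)"
    by (rule sum.inter_filter[symmetric]) simp
  also have "{i \<in> {0..<r}. i < c} = {0..<min r c}" by auto
  finally show ?thesis .
qed

lemma rect_diag_norm_square: assumes y: "y \<in> carrier_vec c"
  shows "(vec_norm2 (rect_diag r c s *\<^sub>v y))\<^sup>2 = (\<Sum>i\<in>{0..<min r c}. (s i * y $ i)\<^sup>2)"
proof -
  have "(vec_norm2 (rect_diag r c s *\<^sub>v y))\<^sup>2 = (\<Sum>i\<in>{0..<r}. if i < c then (s i * y $ i)\<^sup>2 else 0)"
    unfolding vec_norm2_square rect_diag_mult_vec[OF y] by (intro sum.cong) auto
  thus ?thesis unfolding sum_if_less .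
qed

lemma rect_diag_norm_le:
  assumes y: "y \<in> carrier_vec c" and k: "0 \<le> k"
    and small: "\<And>i. i < r \<Longrightarrow> i < c \<Longrightarrow> y $ i \<noteq> 0 \<Longrightarrow> \<bar>s i\<bar> \<le> k"
  shows "vec_norm2 (rect_diag r c s *\<^sub>v y) \<le> k * vec_norm2 y"
proof -
  have "(vec_norm2 (rect_diag r c s *\<^sub>v y))\<^sup>2 \<le> (\<Sum>i\<in>{0..<min r c}. k\<^sup>2 * (y $ i)\<^sup>2)"
    unfolding rect_diag_norm_square[OF y]
  proof (rule sum_mono)
    fix i assume i: "i \<in> {0..<min r c}"
    show "(s i * y $ i)\<^sup>2 \<le> k\<^sup>2 * (y $ i)\<^sup>2"
    proof (cases "y $ i = 0")
      case False
      hence "\<bar>s i\<bar>\<^sup>2 \<le> k\<^sup>2" using small[of i] i by (intro power_mono) auto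
      thus ?thesis by (simp add: power_mult_distrib mult_right_mono)
    qed simp
  qed
  also have "\<dots> \<le> (\<Sum>i\<in>{0..<c}. k\<^sup>2 * (y $ i)\<^sup>2)" by (intro sum_mono2) auto
  also have "\<dots> = (k * vec_norm2 y)\<^sup>2"
    unfolding power_mult_distrib vec_norm2_square sum_distrib_left using y by simp
  finally show ?thesis by (rule power2_le_imp_le) (use k vec_norm2_nonneg[of y] in simp)
qed

lemma rect_diag_norm_ge:
  assumes y: "y \<in> carrier_vec c" and k: "0 \<le> k"
    and large: "\<And>i. i < c \<Longrightarrow> y $ i \<noteq> 0 \<Longrightarrow> i < r \<and> k \<le> \<bar>s i\<bar>"
  shows "k * vec_norm2 y \<le> vec_norm2 (rect_diag r c s *\<^sub>v y)"
proof -
  have "(k * vec_norm2 y)\<^sup>2 = (\<Sum>i\<in>{0..<c}. k\<^sup>2 * (y $ i)\<^sup>2)"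
    unfolding power_mult_distrib vec_norm2_square sum_distrib_left using y by simp
  also have "\<dots> \<le> (\<Sum>i\<in>{0..<c}. if i < r then (s i * y $ i)\<^sup>2 else 0)"
  proof (rule sum_mono)
    fix i assume i: "i \<in> {0..<c}"
    show "k\<^sup>2 * (y $ i)\<^sup>2 \<le> (if i < r then (s i * y $ i)\<^sup>2 else 0)"
    proof (cases "y $ i = 0")
      case False
      hence "i < r" "k \<le> \<bar>s i\<bar>" using large[of i] i by auto
      hence "i < r" "k\<^sup>2 \<le> \<bar>s i\<bar>\<^sup>2" using k power_mono[of k "\<bar>s i\<bar>" 2] by auto
      thus ?thesis by (simp add: power_mult_distrib mult_right_mono)
    qed simp
  qed
  also have "\<dots> = (vec_norm2 (rect_diag r c s *\<^sub>v y))\<^sup>2"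
    unfolding sum_if_less rect_diag_norm_square[OF y] by (simp add: min.commute)
  finally show ?thesis by (rule power2_le_imp_le) (rule vec_norm2_nonneg)
qed

lemma op_bound_rect_diag:
  assumes "0 \<le> k" "\<And>i. i < r \<Longrightarrow> i < c \<Longrightarrow> \<bar>s i\<bar> \<le> k"
  shows "op_bound (rect_diag r c s) k"
  unfolding op_bound_def using rect_diag_norm_le[OF _ assms] by simp

section \<open>Singular value decompositions\<close>

definition is_svd :: "nat \<Rightarrow> nat \<Rightarrow> real mat \<Rightarrow> (nat \<Rightarrow> real) \<Rightarrow> real mat \<Rightarrow> real mat \<Rightarrow> bool" where
  "is_svd r m U s V C \<longleftrightarrow> orth_mat r U \<and> orth_mat m V \<and> (\<forall>i. 0 \<le> s i) \<and>
     (\<forall>i j. i \<le> j \<longrightarrow> j < min r m \<longrightarrow> s j \<le> s i) \<and> C = U * rect_diag r m s * transpose_mat V"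

lemma trunc_svdE:
  assumes "trunc_svd p C L" "C \<in> carrier_mat r m"
  obtains U s V where "is_svd r m U s V C"
    "L = U * rect_diag r m (\<lambda>i. if i < p then s i else 0) * transpose_mat V"
  using assms unfolding trunc_svd_def is_svd_def by auto

lemma svd_norm:
  assumes svd: "is_svd r m U s V C" and v: "v \<in> carrier_vec m"
  shows "vec_norm2 (C *\<^sub>v v) = vec_norm2 (rect_diag r m s *\<^sub>v (transpose_mat V *\<^sub>v v))"
    "vec_norm2 (transpose_mat V *\<^sub>v v) = vec_norm2 v"
proof -
  have U: "orth_mat r U" and V: "orth_mat m V" and C: "C = U * rect_diag r m s * transpose_mat V"
    using svd unfolding is_svd_def by auto
  have Vt: "transpose_mat V \<in> carrier_mat m m" using orth_mat_carrier[OF V] by simp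
  have "C *\<^sub>v v = U *\<^sub>v (rect_diag r m s *\<^sub>v (transpose_mat V *\<^sub>v v))"
    unfolding C using orth_mat_carrier[OF U] Vt v by (simp add: mult_mat_vec_assoc_dim)
  thus "vec_norm2 (C *\<^sub>v v) = vec_norm2 (rect_diag r m s *\<^sub>v (transpose_mat V *\<^sub>v v))"
    using orth_mat_isometry[OF U, of "rect_diag r m s *\<^sub>v (transpose_mat V *\<^sub>v v)"]
    by (simp add: carrier_vecI)
  show "vec_norm2 (transpose_mat V *\<^sub>v v) = vec_norm2 v"
    by (rule orth_mat_isometry[OF orth_mat_transpose[OF V] v])
qed

text \<open>Courant--Fischer, upper half: if \<open>C\<close> is \<open>\<beta>\<close>-small on a subspace of dimension at least
  \<open>m - p\<close> (the range of an injective \<open>D\<close>), then the singular value \<open>s p\<close>, i.e. \<open>\<sigma>\<^sub>p\<^sub>+\<^sub>1(C)\<close>,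
  is at most \<open>\<beta>\<close>.  Proof: the range of \<open>D\<close> meets the span of the first \<open>p + 1\<close> right singular
  vectors nontrivially.\<close>

lemma singular_value_le_on_subspace:
  assumes svd: "is_svd r m U s V C" and D: "D \<in> carrier_mat m q"
    and inj: "\<And>w. w \<in> carrier_vec q \<Longrightarrow> w \<noteq> 0\<^sub>v q \<Longrightarrow> D *\<^sub>v w \<noteq> 0\<^sub>v m"
    and small: "\<And>w. w \<in> carrier_vec q \<Longrightarrow> vec_norm2 (C *\<^sub>v (D *\<^sub>v w)) \<le> \<beta> * vec_norm2 (D *\<^sub>v w)"
    and pr: "p < r" and pm: "p < m" and mq: "m \<le> q + p"
  shows "s p \<le> \<beta>"
proof -
  have V: "orth_mat m V" and s0: "\<forall>i. 0 \<le> s i" and sdec: "\<forall>i j. i \<le> j \<longrightarrow> j < min r m \<longrightarrow> s j \<le> s i"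
    using svd unfolding is_svd_def by auto
  define VD where "VD = transpose_mat V * D"
  have VD: "VD \<in> carrier_mat m q" unfolding VD_def using orth_mat_carrier[OF V] D by simp
  have rows: "\<And>i. i < m - p - 1 \<Longrightarrow> row VD (i + p + 1) \<in> carrier_vec q"
    using row_carrier[of VD] VD by auto
  have "m - p - 1 < q" using mq pm by simp
  then obtain w where w: "w \<in> carrier_vec q" "w \<noteq> 0\<^sub>v q"
    and w0: "\<And>i. i < m - p - 1 \<Longrightarrow> row VD (i + p + 1) \<bullet> w = 0"
    using common_null_vector[of "m - p - 1" "\<lambda>i. row VD (i + p + 1)" q, OF rows] by blast
  define v where "v = D *\<^sub>v w"
  define y where "y = transpose_mat V *\<^sub>v v"
  have v: "v \<in> carrier_vec m" "v \<noteq> 0\<^sub>v m" unfolding v_def using D w inj by auto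
  have y: "y \<in> carrier_vec m" unfolding y_def using orth_mat_carrier[OF V] v by simp
  have yVD: "y = VD *\<^sub>v w" unfolding y_def v_def VD_def using orth_mat_carrier[OF V] D w by simp
  have y0: "y $ i = 0" if "p < i" "i < m" for i
  proof -
    have "y $ i = row VD (i - p - 1 + p + 1) \<bullet> w" using that VD unfolding yVD by simp
    thus ?thesis using w0[of "i - p - 1"] that by simp
  qed
  have "s p * vec_norm2 y \<le> vec_norm2 (rect_diag r m s *\<^sub>v y)"
  proof (rule rect_diag_norm_ge[OF y])
    fix i assume "i < m" "y $ i \<noteq> 0"
    hence "i \<le> p" using y0[of i] by (metis not_le)
    thus "i < r \<and> s p \<le> \<bar>s i\<bar>" using sdec s0 pr pm by auto
  qed (use s0 in simp)
  also have "\<dots> = vec_norm2 (C *\<^sub>v v)" using svd_norm[OF svd v(1)] unfolding y_def by simp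
  also have "\<dots> \<le> \<beta> * vec_norm2 v" using small[OF w(1)] unfolding v_def .
  finally have "s p * vec_norm2 v \<le> \<beta> * vec_norm2 v" using svd_norm(2)[OF svd v(1)] unfolding y_def by simp
  thus ?thesis using vec_norm2_pos[OF v] by simp
qed

text \<open>Courant--Fischer, lower half: if \<open>C\<close> is bounded below by \<open>1/w\<close> on the null space of some
  \<open>F\<^sub>0 \<in> \<real>\<^sup>q\<^sup>\<times>\<^sup>m\<close> with \<open>q + p \<le> m\<close>, then \<open>s (p - 1)\<close>, i.e. \<open>\<sigma>\<^sub>p(C)\<close>, is at least \<open>1/w\<close>.\<close>

lemma singular_value_ge_on_null_space:
  assumes svd: "is_svd r m U s V C" and F0: "F0 \<in> carrier_mat q m"
    and large: "\<And>v. v \<in> carrier_vec m \<Longrightarrow> F0 *\<^sub>v v = 0\<^sub>v q \<Longrightarrow> vec_norm2 v \<le> w * vec_norm2 (C *\<^sub>v v)"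
    and w: "0 \<le> w" and p: "0 < p" and qm: "q + p \<le> m"
  shows "1 \<le> w * s (p - 1)"
proof -
  have V: "orth_mat m V" and s0: "\<forall>i. 0 \<le> s i" and sdec: "\<forall>i j. i \<le> j \<longrightarrow> j < min r m \<longrightarrow> s j \<le> s i"
    using svd unfolding is_svd_def by auto
  have Vc: "V \<in> carrier_mat m m" by (rule orth_mat_carrier[OF V])
  define f where "f = (\<lambda>i. if i < q then row (F0 * V) i else unit_vec m (i - q))"
  have "\<And>i. i < m - 1 \<Longrightarrow> f i \<in> carrier_vec m" unfolding f_def using row_carrier[of "F0 * V"] Vc by auto
  moreover have "m - 1 < m" using qm p by simp
  ultimately obtain y where y: "y \<in> carrier_vec m" "y \<noteq> 0\<^sub>v m" and fy: "\<And>i. i < m - 1 \<Longrightarrow> f i \<bullet> y = 0"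
    by (rule common_null_vector) auto
  define v where "v = V *\<^sub>v y"
  have v: "v \<in> carrier_vec m" unfolding v_def using Vc y by simp
  have "F0 *\<^sub>v v = 0\<^sub>v q"
  proof (rule eq_vecI)
    fix i assume "i < dim_vec (0\<^sub>v q :: real vec)"
    hence "i < q" by simp
    have "F0 *\<^sub>v v = (F0 * V) *\<^sub>v y" unfolding v_def using F0 Vc y by simp
    hence "(F0 *\<^sub>v v) $ i = f i \<bullet> y" unfolding f_def using \<open>i < q\<close> F0 by simp
    thus "(F0 *\<^sub>v v) $ i = 0\<^sub>v q $ i" using fy[of i] \<open>i < q\<close> qm p by simp
  qed (use F0 in simp)
  hence vC: "vec_norm2 v \<le> w * vec_norm2 (C *\<^sub>v v)" by (rule large[OF v])
  have "transpose_mat V *\<^sub>v v = (transpose_mat V * V) *\<^sub>v y" unfolding v_def using Vc y by simp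
  hence Vtv: "transpose_mat V *\<^sub>v v = y" unfolding orth_mat_left_inverse[OF V] using y by simp
  have "vec_norm2 (C *\<^sub>v v) \<le> s (p - 1) * vec_norm2 y"
    unfolding svd_norm(1)[OF svd v] Vtv
  proof (rule rect_diag_norm_le[OF y(1)])
    fix i assume i: "i < r" "i < m" "y $ i \<noteq> 0"
    have "\<not> i < p - 1"
    proof
      assume "i < p - 1"
      hence "f (q + i) \<bullet> y = y $ i" using y qm unfolding f_def by simp
      thus False using fy[of "q + i"] \<open>i < p - 1\<close> qm i(3) by simp
    qed
    thus "\<bar>s i\<bar> \<le> s (p - 1)" using sdec s0 i by auto
  qed (use s0 in simp)
  hence "w * vec_norm2 (C *\<^sub>v v) \<le> w * (s (p - 1) * vec_norm2 v)"
    using svd_norm(2)[OF svd v] Vtv w by (simp add: mult_left_mono)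
  hence "1 * vec_norm2 v \<le> (w * s (p - 1)) * vec_norm2 v" using vC by (simp add: mult.assoc)
  thus ?thesis using vec_norm2_pos[OF v] vec_norm2_pos[OF y] svd_norm(2)[OF svd v] Vtv
    by (simp only: mult_le_cancel_right)
qed

lemma trunc_svd_error:
  assumes svd: "is_svd r m U s V C" and L: "L = U * rect_diag r m (\<lambda>i. if i < p then s i else 0) * transpose_mat V"
  shows "L \<in> carrier_mat r m" "op_bound (L - C) (s p)"
proof -
  have U: "orth_mat r U" and V: "orth_mat m V" and s0: "\<forall>i. 0 \<le> s i"
    and sdec: "\<forall>i j. i \<le> j \<longrightarrow> j < min r m \<longrightarrow> s j \<le> s i" and C: "C = U * rect_diag r m s * transpose_mat V"
    using svd unfolding is_svd_def by auto
  have Uc: "U \<in> carrier_mat r r" and Vt: "transpose_mat V \<in> carrier_mat m m"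
    using orth_mat_carrier[OF U] orth_mat_carrier[OF V] by auto
  show "L \<in> carrier_mat r m" unfolding L using Uc Vt by (intro mult_carrier_mat) auto
  define T where "T = rect_diag r m (\<lambda>i. if i < p then 0 else - s i)"
  have "L - C = (U * rect_diag r m (\<lambda>i. if i < p then s i else 0) - U * rect_diag r m s) * transpose_mat V"
    unfolding L C using Uc Vt by (intro minus_mult_distrib_mat[symmetric]) auto
  also have "\<dots> = U * T * transpose_mat V"
    unfolding T_def using Uc
    by (subst mult_minus_distrib_mat[symmetric])
      (auto simp: rect_diag_minus intro!: arg_cong2[where f="(*)"] rect_diag_cong)
  finally have LC: "L - C = U * T * transpose_mat V" .
  have bT: "op_bound T (s p)" unfolding T_def
    by (rule op_bound_rect_diag) (use s0 sdec in auto)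
  show "op_bound (L - C) (s p)"
    unfolding LC by (rule op_bound_orth_sandwich[OF U V _ bT]) (simp_all add: T_def s0)
qed

text \<open>If the first \<open>p\<close> singular values are at least \<open>1/w\<close>, the orthogonal projection \<open>R\<close> onto the
  span of the first \<open>p\<close> left singular vectors fixes \<open>L\<close> and factors as \<open>R = C Y\<close> with \<open>\<parallel>Y\<parallel> \<le> w\<close>.\<close>

lemma svd_head_projector:
  assumes svd: "is_svd r m U s V C" and L: "L = U * rect_diag r m (\<lambda>i. if i < p then s i else 0) * transpose_mat V"
    and pm: "p \<le> m" and large: "\<And>i. i < p \<Longrightarrow> 0 < s i \<and> 1 \<le> w * s i" and w: "0 \<le> w"
  obtains R Y where "R \<in> carrier_mat r r" "Y \<in> carrier_mat m r" "C * Y = R" "R * L = L" "op_bound Y w"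
proof -
  have U: "orth_mat r U" and V: "orth_mat m V" and C: "C = U * rect_diag r m s * transpose_mat V"
    using svd unfolding is_svd_def by auto
  have Uc: "U \<in> carrier_mat r r" and Vc: "V \<in> carrier_mat m m"
    using orth_mat_carrier[OF U] orth_mat_carrier[OF V] by auto
  define Pi where "Pi = rect_diag r r (\<lambda>i. if i < p then 1 else 0)"
  define Sg where "Sg = rect_diag m r (\<lambda>i. if i < p then 1 / s i else 0)"
  define R where "R = U * Pi * transpose_mat U"
  define Y where "Y = V * Sg * transpose_mat U"
  have "rect_diag r m s * Sg = Pi" unfolding Sg_def Pi_def rect_diag_mult
    by (rule rect_diag_cong) (use large pm in force)
  hence "C * Y = U * (rect_diag r m s * (transpose_mat V * V) * Sg) * transpose_mat U"
    using Uc Vc unfolding C Y_def Sg_def by (simp add: mult_assoc_dim)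
  hence CY: "C * Y = R"
    using \<open>rect_diag r m s * Sg = Pi\<close> unfolding R_def orth_mat_left_inverse[OF V] by simp
  define Sp where "Sp = rect_diag r m (\<lambda>i. if i < p then s i else 0)"
  have Pi: "Pi \<in> carrier_mat r r" unfolding Pi_def by simp
  have PiSp: "Pi * Sp = Sp" unfolding Pi_def Sp_def rect_diag_mult by (rule rect_diag_cong) auto
  have "R * L = U * (Pi * (transpose_mat U * U) * Sp) * transpose_mat V"
    using Uc Vc unfolding R_def L Pi_def Sp_def by (simp add: mult_assoc_dim)
  also have "\<dots> = L"
    unfolding orth_mat_left_inverse[OF U] right_mult_one_mat[OF Pi] PiSp L[folded Sp_def] using Uc Vc
    by (simp add: mult_assoc_dim)
  finally have RL: "R * L = L" .
  have bSg: "op_bound Sg w" unfolding Sg_def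
  proof (rule op_bound_rect_diag[OF w])
    fix i assume "i < m" "i < r"
    show "\<bar>if i < p then 1 / s i else 0\<bar> \<le> w"
      using large[of i] w by (auto simp: field_simps)
  qed
  have "op_bound Y w"
    unfolding Y_def by (rule op_bound_orth_sandwich[OF V U _ bSg w]) (simp add: Sg_def)
  moreover have "R \<in> carrier_mat r r" "Y \<in> carrier_mat m r" unfolding R_def Y_def Pi_def Sg_def using Uc Vc by auto
  ultimately show ?thesis using that CY RL by blast
qed

text \<open>From now on \<open>K = [A B; G D]\<close> with \<open>A \<in> \<real>\<^sup>n\<^sup>\<times>\<^sup>r\<close>, \<open>B \<in> \<real>\<^sup>n\<^sup>\<times>\<^sup>q\<close>, \<open>G \<in> \<real>\<^sup>m\<^sup>\<times>\<^sup>r\<close>, \<open>D \<in> \<real>\<^sup>m\<^sup>\<times>\<^sup>q\<close>,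
  its inverse is \<open>X = [E C; H F]\<close>, and \<open>J = [E L; H F]\<close> replaces \<open>C\<close> by \<open>L\<close>.\<close>

lemma block_left_inverse:
  fixes X1 W G D E L H F :: "real mat"
  assumes X1: "X1 \<in> carrier_mat n r" and W: "W \<in> carrier_mat m m" and G: "G \<in> carrier_mat m r"
    and D: "D \<in> carrier_mat m q" and E: "E \<in> carrier_mat r n" and L: "L \<in> carrier_mat r m"
    and H: "H \<in> carrier_mat q n" and F: "F \<in> carrier_mat q m" and N: "N = n + m"
    and X1E: "X1 * E = 1\<^sub>m n" and X1L: "X1 * L = 0\<^sub>m n m"
    and GEDH: "G * E + D * H = 0\<^sub>m m n" and WGLDF: "W * (G * L + D * F) = 1\<^sub>m m"
  shows "four_block_mat X1 (0\<^sub>m n q) (W * G) (W * D) * four_block_mat E L H F = 1\<^sub>m N"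
proof -
  have "W * G * E + W * D * H = W * (G * E + D * H)"
    using mult_add_distrib_mat[of W m m "G * E" n "D * H"] W G D E H by simp
  hence bl: "W * G * E + W * D * H = 0\<^sub>m m n" unfolding GEDH using W by simp
  have "W * G * L + W * D * F = W * (G * L + D * F)"
    using mult_add_distrib_mat[of W m m "G * L" m "D * F"] W G D L F by simp
  hence br: "W * G * L + W * D * F = 1\<^sub>m m" unfolding WGLDF .
  have "four_block_mat X1 (0\<^sub>m n q) (W * G) (W * D) * four_block_mat E L H F
      = four_block_mat (X1 * E + 0\<^sub>m n q * H) (X1 * L + 0\<^sub>m n q * F) (W * G * E + W * D * H) (W * G * L + W * D * F)"
    by (rule mult_four_block_mat) (use assms in auto)
  also have "\<dots> = 1\<^sub>m N" unfolding bl br X1E X1L N using H F by simp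
  finally show ?thesis .
qed

text \<open>The identities of the theorem come from \<open>K (J - X) J\<^sup>-\<^sup>1 = K J J\<^sup>-\<^sup>1 - K X J\<^sup>-\<^sup>1 = K - J\<^sup>-\<^sup>1\<close>:
  only the right column of \<open>J - X\<close> is nonzero, so comparing upper blocks gives them.\<close>

lemma block_inverse_difference:
  fixes A B G D E C H F L At Gt Dt :: "real mat"
  assumes A: "A \<in> carrier_mat n r" and B: "B \<in> carrier_mat n q" and G: "G \<in> carrier_mat m r"
    and D: "D \<in> carrier_mat m q" and E: "E \<in> carrier_mat r n" and C: "C \<in> carrier_mat r m"
    and H: "H \<in> carrier_mat q n" and F: "F \<in> carrier_mat q m" and L: "L \<in> carrier_mat r m"
    and At: "At \<in> carrier_mat n r" and Gt: "Gt \<in> carrier_mat m r" and Dt: "Dt \<in> carrier_mat m q"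
    and N: "N = n + m" "N = r + q"
    and KX: "four_block_mat A B G D * four_block_mat E C H F = 1\<^sub>m N"
    and JW: "four_block_mat E L H F * four_block_mat At (0\<^sub>m n q) Gt Dt = 1\<^sub>m N"
  shows "B = A * (L - C) * Dt" "A - At = A * (L - C) * Gt"
proof -
  define K where "K = four_block_mat A B G D"
  define X where "X = four_block_mat E C H F"
  define J where "J = four_block_mat E L H F"
  define W where "W = four_block_mat At (0\<^sub>m n q) Gt Dt"
  have K: "K \<in> carrier_mat N N" and X: "X \<in> carrier_mat N N" and J: "J \<in> carrier_mat N N"
    and W: "W \<in> carrier_mat N N" unfolding K_def X_def J_def W_def using assms by auto
  have "K * (J - X) * W = (K * J - K * X) * W" unfolding mult_minus_distrib_mat[OF K J X] ..
  also have "\<dots> = K * J * W - K * X * W" by (rule minus_mult_distrib_mat) (use K J X W in auto)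
  also have "\<dots> = K * (J * W) - (K * X) * W" unfolding assoc_mult_mat[OF K J W] ..
  also have "\<dots> = K - W"
    using JW KX unfolding K_def[symmetric] X_def[symmetric] J_def[symmetric] W_def[symmetric]
    using right_mult_one_mat[OF K] left_mult_one_mat[OF W] by simp
  finally have diff: "K * (J - X) * W = K - W" .
  have LC: "L - C \<in> carrier_mat r m" using minus_carrier_mat[OF C] .
  have "J - X = four_block_mat (0\<^sub>m r n) (L - C) (0\<^sub>m q n) (0\<^sub>m q m)"
    unfolding J_def X_def by (rule eq_matI) (use assms in auto)
  hence "K * (J - X) = four_block_mat (A * 0\<^sub>m r n + B * 0\<^sub>m q n) (A * (L - C) + B * 0\<^sub>m q m)
      (G * 0\<^sub>m r n + D * 0\<^sub>m q n) (G * (L - C) + D * 0\<^sub>m q m)"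
    unfolding K_def by (simp add: mult_four_block_mat[OF A B G D zero_carrier_mat LC zero_carrier_mat zero_carrier_mat])
  also have "\<dots> = four_block_mat (0\<^sub>m n n) (A * (L - C)) (0\<^sub>m m n) (G * (L - C))"
    using A B G D LC by simp
  finally have KJX: "K * (J - X) = four_block_mat (0\<^sub>m n n) (A * (L - C)) (0\<^sub>m m n) (G * (L - C))" .
  have "K * (J - X) * W = four_block_mat (0\<^sub>m n n * At + A * (L - C) * Gt) (0\<^sub>m n n * 0\<^sub>m n q + A * (L - C) * Dt)
      (0\<^sub>m m n * At + G * (L - C) * Gt) (0\<^sub>m m n * 0\<^sub>m n q + G * (L - C) * Dt)"
    unfolding KJX W_def by (rule mult_four_block_mat) (use A G LC At Gt Dt in auto)
  hence "K * (J - X) * W = four_block_mat (A * (L - C) * Gt) (A * (L - C) * Dt)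
      (G * (L - C) * Gt) (G * (L - C) * Dt)"
    using A G LC At Gt Dt by simp
  moreover have "K - W = four_block_mat (A - At) B (G - Gt) (D - Dt)"
    unfolding K_def W_def by (rule eq_matI) (use assms in auto)
  ultimately have eq: "four_block_mat (A * (L - C) * Gt) (A * (L - C) * Dt) (G * (L - C) * Gt) (G * (L - C) * Dt)
      = four_block_mat (A - At) B (G - Gt) (D - Dt)" using diff by simp
  have "A * (L - C) * Gt \<in> carrier_mat n r" "A * (L - C) * Dt \<in> carrier_mat n q"
    "G * (L - C) * Gt \<in> carrier_mat m r" "G * (L - C) * Dt \<in> carrier_mat m q"
    "A - At \<in> carrier_mat n r" "G - Gt \<in> carrier_mat m r" "D - Dt \<in> carrier_mat m q"
    using A G LC At Gt Dt by (auto intro: minus_carrier_mat)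
  from four_block_mat_inject[OF this(1-5) B this(6,7) eq]
  show "B = A * (L - C) * Dt" "A - At = A * (L - C) * Gt" by simp_all
qed

section \<open>The perturbed inverse\<close>

text \<open>If \<open>K\<^sub>0\<close> has an inverse of norm at most \<open>c\<^sub>0\<close> and \<open>\<parallel>Z\<parallel> \<le> 1 / (2 c\<^sub>0)\<close>, then \<open>K\<^sub>0 + Z\<close> is
  invertible with inverse of norm at most \<open>2 c\<^sub>0\<close>, since \<open>K\<^sub>0 + Z = K\<^sub>0 (1 + K\<^sub>0\<^sup>-\<^sup>1 Z)\<close>.\<close>

lemma perturbed_inverse:
  fixes K0 K0i Z :: "real mat"
  assumes K0: "K0 \<in> carrier_mat N N" and K0i: "K0i \<in> carrier_mat N N" "K0 * K0i = 1\<^sub>m N"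
    and bK0i: "op_bound K0i c0" "0 \<le> c0" and Z: "Z \<in> carrier_mat N N" "op_bound Z z"
    and small: "c0 * z \<le> 1/2"
  obtains Ki where "Ki \<in> carrier_mat N N" "(K0 + Z) * Ki = 1\<^sub>m N" "Ki * (K0 + Z) = 1\<^sub>m N"
    "op_bound Ki (2 * c0)"
proof -
  have KZ: "K0i * Z \<in> carrier_mat N N" using K0i Z by simp
  have "op_bound (K0i * Z) (c0 * z)" by (rule op_bound_mult[OF bK0i(1) Z(2) K0i(1) Z(1) bK0i(2)])
  then obtain Ni where Ni: "Ni \<in> carrier_mat N N" "(1\<^sub>m N + K0i * Z) * Ni = 1\<^sub>m N" "op_bound Ni 2"
    using inverse_near_identity[OF KZ _ small] by (metis op_bound_mono order_refl)
  have "K0 * (1\<^sub>m N + K0i * Z) = K0 * 1\<^sub>m N + K0 * (K0i * Z)"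
    by (rule mult_add_distrib_mat[OF K0 one_carrier_mat KZ])
  also have "K0 * (K0i * Z) = (K0 * K0i) * Z" by (rule assoc_mult_mat[symmetric, OF K0 K0i(1) Z(1)])
  finally have factor: "K0 + Z = K0 * (1\<^sub>m N + K0i * Z)"
    unfolding K0i(2) right_mult_one_mat[OF K0] left_mult_one_mat[OF Z(1)] ..
  define Ki where "Ki = Ni * K0i"
  have Ki: "Ki \<in> carrier_mat N N" unfolding Ki_def using Ni K0i by simp
  have "(K0 + Z) * Ki = K0 * (((1\<^sub>m N + K0i * Z) * Ni) * K0i)"
    unfolding factor Ki_def using K0 K0i(1) Z(1) Ni(1) by (simp add: mult_assoc_dim)
  also have "\<dots> = 1\<^sub>m N" unfolding Ni(2) using K0i by simp
  finally have right: "(K0 + Z) * Ki = 1\<^sub>m N" .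
  have "op_bound Ki (2 * c0)" unfolding Ki_def by (rule op_bound_mult[OF Ni(3) bK0i(1) Ni(1) K0i(1)]) simp
  thus ?thesis using that Ki right mat_mult_left_right_inverse[OF _ Ki right] K0 Z by simp
qed

lemma op_bound_upper_right_block:
  fixes B :: "real mat"
  assumes B: "B \<in> carrier_mat n q" and bB: "op_bound B b" and b: "0 \<le> b"
  shows "op_bound (four_block_mat (0\<^sub>m n r) B (0\<^sub>m m r) (0\<^sub>m m q)) (real (n + m) * real (r + q) * b)"
proof (rule op_bound_entries)
  show "four_block_mat (0\<^sub>m n r) B (0\<^sub>m m r) (0\<^sub>m m q) \<in> carrier_mat (n + m) (r + q)" using B by simp
  fix i j assume "i < n + m" "j < r + q"
  thus "\<bar>four_block_mat (0\<^sub>m n r) B (0\<^sub>m m r) (0\<^sub>m m q) $$ (i,j)\<bar> \<le> b"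
    using abs_entry_le_op_bound[OF bB, of i "j - r"] B b by auto
qed

lemma perturbed_block_inverse:
  fixes A B G D K0i :: "real mat"
  assumes A: "A \<in> carrier_mat n r" and B: "B \<in> carrier_mat n q" and G: "G \<in> carrier_mat m r"
    and D: "D \<in> carrier_mat m q" and N: "N = n + m" "N = r + q"
    and K0i: "K0i \<in> carrier_mat N N" "four_block_mat A (0\<^sub>m n q) G D * K0i = 1\<^sub>m N"
    and bK0i: "op_bound K0i c0" "0 \<le> c0" and bB: "op_bound B b" "0 \<le> b"
    and small: "c0 * (real N * real N * b) \<le> 1/2"
  shows "invertible_mat (four_block_mat A B G D)"
    "\<And>X. X \<in> carrier_mat N N \<Longrightarrow> four_block_mat A B G D * X = 1\<^sub>m N \<Longrightarrow>
      X * four_block_mat A B G D = 1\<^sub>m N \<and> op_bound X (2 * c0)"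
proof -
  define Z where "Z = four_block_mat (0\<^sub>m n r) B (0\<^sub>m m r) (0\<^sub>m m q)"
  note carrier_N = four_block_carrier_mat[OF A D, unfolded N(1)[symmetric] N(2)[symmetric]]
  have K0: "four_block_mat A (0\<^sub>m n q) G D \<in> carrier_mat N N" by (rule carrier_N)
  have "Z \<in> carrier_mat (n + m) (r + q)" unfolding Z_def using B by simp
  hence Z: "Z \<in> carrier_mat N N" "op_bound Z (real N * real N * b)"
    unfolding Z_def N(1)[symmetric] N(2)[symmetric]
    using op_bound_upper_right_block[OF B bB(1,2), of r m, unfolded N(1)[symmetric] N(2)[symmetric]] by auto
  have KZ: "four_block_mat A B G D = four_block_mat A (0\<^sub>m n q) G D + Z"
    unfolding Z_def using A B G D by (simp add: add_four_block_mat[of _ n r _ q _ m])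
  obtain Ki where Ki: "Ki \<in> carrier_mat N N" "four_block_mat A B G D * Ki = 1\<^sub>m N"
    "Ki * four_block_mat A B G D = 1\<^sub>m N" "op_bound Ki (2 * c0)"
    using perturbed_inverse[OF K0 K0i bK0i Z small] unfolding KZ by blast
  have K: "four_block_mat A B G D \<in> carrier_mat N N" by (rule carrier_N)
  show "invertible_mat (four_block_mat A B G D)" by (rule invertible_matI[OF K Ki(1,3)])
  fix X assume X: "X \<in> carrier_mat N N" and KX: "four_block_mat A B G D * X = 1\<^sub>m N"
  have "X = (Ki * four_block_mat A B G D) * X" using Ki(3) X by simp
  also have "\<dots> = Ki" using Ki(1) K X KX by simp
  finally show "X * four_block_mat A B G D = 1\<^sub>m N \<and> op_bound X (2 * c0)" using Ki by simp
qed

section \<open>Singular values of the perturbed block \<open>C\<close>\<close>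

text \<open>\<open>\<sigma>\<^sub>p\<^sub>+\<^sub>1(C) = O(\<parallel>B\<parallel>)\<close> because \<open>C D = - E B\<close> and \<open>D\<close> has the left inverse \<open>F\<^sub>0\<close>; and
  \<open>\<sigma>\<^sub>p(C)\<close> stays bounded below because on the null space of \<open>F\<^sub>0\<close> the identity factors
  through \<open>C\<close> as \<open>G C\<^sub>0 G C\<close>.  Here \<open>C\<^sub>0, F\<^sub>0\<close> are the right blocks of \<open>K\<^sub>0\<^sup>-\<^sup>1\<close>.\<close>

lemma singular_value_gap:
  fixes E B C D F G C0 F0 :: "real mat"
  assumes svd: "is_svd r m U s V C"
    and E: "E \<in> carrier_mat r n" and B: "B \<in> carrier_mat n q" and C: "C \<in> carrier_mat r m"
    and D: "D \<in> carrier_mat m q" and F: "F \<in> carrier_mat q m" and G: "G \<in> carrier_mat m r"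
    and C0: "C0 \<in> carrier_mat r m" and F0: "F0 \<in> carrier_mat q m"
    and EBCD: "E * B + C * D = 0\<^sub>m r q" and GCDF: "G * C + D * F = 1\<^sub>m m"
    and C0D: "C0 * D = 0\<^sub>m r q" and F0D: "F0 * D = 1\<^sub>m q" and GCDF0: "G * C0 + D * F0 = 1\<^sub>m m"
    and bE: "op_bound E kE" and bB: "op_bound B b" and bF0: "op_bound F0 f0"
    and bW: "op_bound (G * C0 * G) w0" and nn: "0 \<le> kE" "0 \<le> b" "0 \<le> w0"
    and p: "0 < p" "p < r" and q: "0 < q" and mq: "m = q + p"
  shows "s p \<le> kE * b * f0" "1 \<le> w0 * s (p - 1)"
proof -
  have CD: "C * D = - (E * B)" by (rule mat_add_eq_zero_imp_eq_uminus(2)[OF _ _ EBCD]) (use E B C D in auto)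
  have F0Dw: "F0 *\<^sub>v (D *\<^sub>v w) = w" if "w \<in> carrier_vec q" for w
    using assoc_mult_mat_vec[OF F0 D that, symmetric] F0D that by simp
  show "s p \<le> kE * b * f0"
  proof (rule singular_value_le_on_subspace[OF svd D])
    fix w :: "real vec" assume w: "w \<in> carrier_vec q"
    show "D *\<^sub>v w \<noteq> 0\<^sub>v m" if "w \<noteq> 0\<^sub>v q" using F0Dw[OF w] that F0 by auto
    have "C *\<^sub>v (D *\<^sub>v w) = - (E *\<^sub>v (B *\<^sub>v w))"
      using assoc_mult_mat_vec[OF C D w, symmetric] assoc_mult_mat_vec[OF E B w] w E B
      unfolding CD by simp
    hence "vec_norm2 (C *\<^sub>v (D *\<^sub>v w)) \<le> kE * vec_norm2 (B *\<^sub>v w)" using op_boundD[OF bE] B E w by simp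
    also have "\<dots> \<le> kE * (b * vec_norm2 w)" using op_boundD[OF bB] B w nn(1) by (simp add: mult_left_mono)
    also have "\<dots> \<le> kE * (b * (f0 * vec_norm2 (D *\<^sub>v w)))"
      using op_boundD[OF bF0, of "D *\<^sub>v w"] F0Dw[OF w] F0 D w nn(1,2) by (intro mult_left_mono) auto
    finally show "vec_norm2 (C *\<^sub>v (D *\<^sub>v w)) \<le> kE * b * f0 * vec_norm2 (D *\<^sub>v w)"
      by (simp add: mult.assoc)
  qed (use p q mq in auto)
  have "C0 = C0 * (G * C + D * F)" unfolding GCDF using C0 by simp
  also have "\<dots> = C0 * (G * C) + C0 * (D * F)" by (rule mult_add_distrib_mat[OF C0]) (use G C D F in auto)
  also have "C0 * (D * F) = 0\<^sub>m r m"
    unfolding assoc_mult_mat[symmetric, OF C0 D F] C0D using F by simp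
  also have "C0 * (G * C) = C0 * G * C" by (rule assoc_mult_mat[symmetric, OF C0 G C])
  finally have C0GC: "C0 * G * C = C0" using C0 G C by simp
  show "1 \<le> w0 * s (p - 1)"
  proof (rule singular_value_ge_on_null_space[OF svd F0 _ nn(3) p(1)])
    fix v :: "real vec" assume v: "v \<in> carrier_vec m" and F0v: "F0 *\<^sub>v v = 0\<^sub>v q"
    have "v = (G * C0 + D * F0) *\<^sub>v v" unfolding GCDF0 using v by simp
    also have "\<dots> = G *\<^sub>v (C0 *\<^sub>v v)"
      using add_mult_distrib_mat_vec[of "G * C0" m m "D * F0" v] G C0 D F0 v F0v by simp
    also have "C0 *\<^sub>v v = (C0 * G * C) *\<^sub>v v" unfolding C0GC ..
    also have "\<dots> = C0 *\<^sub>v (G *\<^sub>v (C *\<^sub>v v))" using C0 G C v by (simp add: mult_mat_vec_assoc_dim)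
    finally have "v = (G * C0 * G) *\<^sub>v (C *\<^sub>v v)" using G C0 C v by (simp add: mult_mat_vec_assoc_dim)
    thus "vec_norm2 v \<le> w0 * vec_norm2 (C *\<^sub>v v)" using op_boundD[OF bW, of "C *\<^sub>v v"] G C v by simp
  qed (use mq in simp)
qed

section \<open>The truncated matrix \<open>J\<close>\<close>

text \<open>The left factor: with the projector \<open>R = C Y\<close> fixing \<open>L\<close>, the matrix \<open>A (1 - R) E\<close> is
  \<open>1 + O(\<parallel>B\<parallel>)\<close> because \<open>A E = 1 - B H\<close> and \<open>A R = A C Y = - B F Y\<close>.  Inverting it gives
  \<open>X\<^sub>1 = (A (1 - R) E)\<^sup>-\<^sup>1 A (1 - R)\<close> with \<open>X\<^sub>1 E = 1\<close> and \<open>X\<^sub>1 L = 0\<close>.\<close>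

lemma left_factor_exists:
  fixes A B E H C F L R Y :: "real mat"
  assumes A: "A \<in> carrier_mat n r" and B: "B \<in> carrier_mat n q" and E: "E \<in> carrier_mat r n"
    and H: "H \<in> carrier_mat q n" and C: "C \<in> carrier_mat r m" and F: "F \<in> carrier_mat q m"
    and L: "L \<in> carrier_mat r m" and R: "R \<in> carrier_mat r r" and Y: "Y \<in> carrier_mat m r"
    and AEBH: "A * E + B * H = 1\<^sub>m n" and ACBF: "A * C + B * F = 0\<^sub>m n m"
    and CY: "C * Y = R" and RL: "R * L = L"
    and bB: "op_bound B b" and bH: "op_bound H kH" and bF: "op_bound F kF" and bY: "op_bound Y w"
    and bE: "op_bound E kE" and nn: "0 \<le> b" "0 \<le> kF" "0 \<le> w"
    and small: "b * kH + b * kF * w * kE \<le> 1/2"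
  obtains X1 where "X1 \<in> carrier_mat n r" "X1 * E = 1\<^sub>m n" "X1 * L = 0\<^sub>m n m"
proof -
  define P where "P = A * (1\<^sub>m r - R)"
  define Xs where "Xs = B * (F * (Y * E)) - B * H"
  have P: "P \<in> carrier_mat n r" unfolding P_def using A R by (auto intro: minus_carrier_mat)
  have Xs: "Xs \<in> carrier_mat n n" unfolding Xs_def using B H by (auto intro: minus_carrier_mat)
  have AC: "A * C = - (B * F)" by (rule mat_add_eq_zero_imp_eq_uminus(1)[OF _ _ ACBF]) (use B F A C in auto)
  have "A * R = (A * C) * Y" unfolding CY[symmetric] by (rule assoc_mult_mat[symmetric, OF A C Y])
  hence ARE: "A * R * E = - (B * (F * (Y * E)))" unfolding AC using B F Y E by (simp add: mult_assoc_dim)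
  have AE: "A * E = 1\<^sub>m n - B * H" by (rule mat_add_eq_imp_eq_minus[OF _ _ AEBH]) (use A E B H in auto)
  have "P * E = (A - A * R) * E" unfolding P_def mult_minus_distrib_mat[OF A one_carrier_mat R] using A by simp
  also have "\<dots> = A * E - A * R * E" by (rule minus_mult_distrib_mat) (use A R E in auto)
  also have "\<dots> = 1\<^sub>m n + Xs" unfolding AE ARE Xs_def by (rule eq_matI) (use B H F Y E in auto)
  finally have PE: "P * E = 1\<^sub>m n + Xs" .
  have "op_bound (B * (F * (Y * E))) (b * (kF * (w * kE)))"
    using op_bound_mult[OF bY bE Y E nn(3)] F Y E B
    by (intro op_bound_mult[OF bB op_bound_mult[OF bF]]) (use nn in auto)
  hence "op_bound Xs (b * (kF * (w * kE)) + b * kH)"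
    unfolding Xs_def using op_bound_mult[OF bB bH B H nn(1)] B F Y E H by (intro op_bound_minus) auto
  moreover have "b * (kF * (w * kE)) + b * kH \<le> 1/2" using small by (simp add: algebra_simps)
  ultimately have "op_bound Xs (1/2)" by (rule op_bound_mono)
  then obtain Zi where Zi: "Zi \<in> carrier_mat n n" "Zi * (1\<^sub>m n + Xs) = 1\<^sub>m n"
    using inverse_near_identity[OF Xs] by (metis order_refl)
  show ?thesis
  proof (rule that)
    show "Zi * P \<in> carrier_mat n r" using Zi P by simp
    show "Zi * P * E = 1\<^sub>m n" unfolding assoc_mult_mat[OF Zi(1) P E] PE by (rule Zi(2))
    have "(1\<^sub>m r - R) * L = 0\<^sub>m r m"
      unfolding minus_mult_distrib_mat[OF one_carrier_mat R L] RL using L by simp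
    moreover have "P * L = A * ((1\<^sub>m r - R) * L)"
      unfolding P_def by (rule assoc_mult_mat[OF A minus_carrier_mat[OF R] L])
    ultimately have "P * L = 0\<^sub>m n m" using A by simp
    thus "Zi * P * L = 0\<^sub>m n m" unfolding assoc_mult_mat[OF Zi(1) P L] using Zi by simp
  qed
qed

text \<open>The right factor: \<open>G L + D F = 1 + G (L - C)\<close> (as \<open>G C + D F = 1\<close>) is a small perturbation
  of the identity once \<open>\<parallel>G\<parallel> \<parallel>L - C\<parallel> \<le> 1/2\<close>.\<close>

lemma right_factor_exists:
  fixes G C L D F :: "real mat"
  assumes G: "G \<in> carrier_mat m r" and C: "C \<in> carrier_mat r m" and L: "L \<in> carrier_mat r m"
    and D: "D \<in> carrier_mat m q" and F: "F \<in> carrier_mat q m" and GCDF: "G * C + D * F = 1\<^sub>m m"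
    and bG: "op_bound G g" "0 \<le> g" and bLC: "op_bound (L - C) \<delta>" and small: "g * \<delta> \<le> 1/2"
  obtains W where "W \<in> carrier_mat m m" "W * (G * L + D * F) = 1\<^sub>m m"
proof -
  have LC: "L - C \<in> carrier_mat r m" using minus_carrier_mat[OF C] .
  have GLC: "G * (L - C) \<in> carrier_mat m m" using G LC by simp
  have "op_bound (G * (L - C)) (1/2)" using op_bound_mult[OF bG(1) bLC G LC bG(2)] small by (rule op_bound_mono)
  then obtain W where W: "W \<in> carrier_mat m m" "W * (1\<^sub>m m + G * (L - C)) = 1\<^sub>m m"
    using inverse_near_identity[OF GLC] by (metis order_refl)
  have "G * L + D * F = (G * C + D * F) + G * (L - C)"
    unfolding mult_minus_distrib_mat[OF G L C] by (rule eq_matI) (use G L C D F in auto)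
  hence "W * (G * L + D * F) = 1\<^sub>m m" unfolding GCDF using W by simp
  thus ?thesis using that W(1) by blast
qed

lemma truncated_inverse_from_factors:
  fixes A B G D E C H F L X1 W :: "real mat"
  assumes A: "A \<in> carrier_mat n r" and B: "B \<in> carrier_mat n q" and G: "G \<in> carrier_mat m r"
    and D: "D \<in> carrier_mat m q" and E: "E \<in> carrier_mat r n" and C: "C \<in> carrier_mat r m"
    and H: "H \<in> carrier_mat q n" and F: "F \<in> carrier_mat q m" and L: "L \<in> carrier_mat r m"
    and X1: "X1 \<in> carrier_mat n r" and W: "W \<in> carrier_mat m m" and N: "N = n + m" "N = r + q"
    and KX: "four_block_mat A B G D * four_block_mat E C H F = 1\<^sub>m N"
    and GEDH: "G * E + D * H = 0\<^sub>m m n" and X1E: "X1 * E = 1\<^sub>m n" and X1L: "X1 * L = 0\<^sub>m n m"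
    and WGLDF: "W * (G * L + D * F) = 1\<^sub>m m"
  shows "invertible_mat (four_block_mat E L H F) \<and>
    (\<exists>At Gt Dt. At \<in> carrier_mat n r \<and> Gt \<in> carrier_mat m r \<and> Dt \<in> carrier_mat m q \<and>
       four_block_mat E L H F * four_block_mat At (0\<^sub>m n q) Gt Dt = 1\<^sub>m N \<and>
       four_block_mat At (0\<^sub>m n q) Gt Dt * four_block_mat E L H F = 1\<^sub>m N \<and>
       B = A * (L - C) * Dt \<and> A - At = A * (L - C) * Gt)"
proof -
  have WG: "W * G \<in> carrier_mat m r" and WD: "W * D \<in> carrier_mat m q" using W G D by auto
  have WJ: "four_block_mat X1 (0\<^sub>m n q) (W * G) (W * D) * four_block_mat E L H F = 1\<^sub>m N"
    by (rule block_left_inverse[OF X1 W G D E L H F N(1) X1E X1L GEDH WGLDF])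
  have J: "four_block_mat E L H F \<in> carrier_mat N N"
    using four_block_carrier_mat[OF E F] unfolding N(2)[symmetric] N(1)[symmetric] .
  have Wm: "four_block_mat X1 (0\<^sub>m n q) (W * G) (W * D) \<in> carrier_mat N N"
    using four_block_carrier_mat[OF X1 WD] unfolding N(2)[symmetric] N(1)[symmetric] .
  have JW: "four_block_mat E L H F * four_block_mat X1 (0\<^sub>m n q) (W * G) (W * D) = 1\<^sub>m N"
    by (rule mat_mult_left_right_inverse[OF Wm J WJ])
  note ids = block_inverse_difference[OF A B G D E C H F L X1 WG WD N KX JW]
  show ?thesis
    apply (rule conjI[OF invertible_matI[OF J Wm WJ]])
    apply (rule exI[of _ X1], rule exI[of _ "W * G"], rule exI[of _ "W * D"])
    using JW WJ ids X1 WG WD by simp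
qed

lemma head_singular_values_large:
  assumes svd: "is_svd r m U s V C" and head: "1 \<le> w * s (p - 1)" and w: "0 \<le> w"
    and p: "p \<le> min r m" and i: "i < p"
  shows "0 < s i \<and> 1 \<le> w * s i"
proof -
  have "\<forall>i j. i \<le> j \<longrightarrow> j < min r m \<longrightarrow> s j \<le> s i" using svd unfolding is_svd_def by auto
  moreover have "i \<le> p - 1" "p - 1 < min r m" using i p by auto
  ultimately have "s (p - 1) \<le> s i" by blast
  hence "1 \<le> w * s i" using head mult_left_mono[OF _ w] by (meson order_trans)
  moreover have "0 < s i"
  proof (rule ccontr)
    assume "\<not> 0 < s i"
    hence "w * s i \<le> 0" using w by (simp add: mult_nonneg_nonpos)
    thus False using \<open>1 \<le> w * s i\<close> by simp
  qed
  ultimately show ?thesis by simp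
qed

lemma truncated_inverse_structure:
  fixes A B G D E C H F L C0 F0 :: "real mat"
  assumes A: "A \<in> carrier_mat n r" and B: "B \<in> carrier_mat n q" and G: "G \<in> carrier_mat m r"
    and D: "D \<in> carrier_mat m q" and E: "E \<in> carrier_mat r n" and C: "C \<in> carrier_mat r m"
    and H: "H \<in> carrier_mat q n" and F: "F \<in> carrier_mat q m"
    and C0: "C0 \<in> carrier_mat r m" and F0: "F0 \<in> carrier_mat q m"
    and dims: "r = n + p" "m = q + p" "N = n + m" and pos: "0 < n" "0 < p" "0 < q"
    and KX: "four_block_mat A B G D * four_block_mat E C H F = 1\<^sub>m N"
    and XK: "four_block_mat E C H F * four_block_mat A B G D = 1\<^sub>m N"
    and C0D: "C0 * D = 0\<^sub>m r q" and F0D: "F0 * D = 1\<^sub>m q" and GCDF0: "G * C0 + D * F0 = 1\<^sub>m m"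
    and bB: "op_bound B b" and bE: "op_bound E kE" and bF: "op_bound F kF" and bH: "op_bound H kH"
    and bG: "op_bound G g" and bF0: "op_bound F0 f0" and bW: "op_bound (G * C0 * G) w0"
    and nn: "0 \<le> b" "0 \<le> kE" "0 \<le> kF" "0 \<le> g" "0 \<le> w0"
    and small: "b * kH + b * kF * w0 * kE \<le> 1/2" "g * (kE * b * f0) \<le> 1/2"
    and svd: "trunc_svd p C L"
  shows "invertible_mat (four_block_mat E L H F) \<and>
    (\<exists>At Gt Dt. At \<in> carrier_mat n r \<and> Gt \<in> carrier_mat m r \<and> Dt \<in> carrier_mat m q \<and>
       four_block_mat E L H F * four_block_mat At (0\<^sub>m n q) Gt Dt = 1\<^sub>m N \<and>
       four_block_mat At (0\<^sub>m n q) Gt Dt * four_block_mat E L H F = 1\<^sub>m N \<and>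
       B = A * (L - C) * Dt \<and> A - At = A * (L - C) * Gt)"
proof -
  have N: "N = r + q" and pr: "p < r" using dims pos by auto
  note KXb = four_block_mult_one[OF A B G D E C H F dims(3) KX]
  note XKb = four_block_mult_one[OF E C H F A B G D N XK]
  obtain U s V where svdU: "is_svd r m U s V C"
    and Ldef: "L = U * rect_diag r m (\<lambda>i. if i < p then s i else 0) * transpose_mat V"
    using trunc_svdE[OF svd C] .
  note gap = singular_value_gap[OF svdU E B C D F G C0 F0 XKb(2) KXb(4) C0D F0D GCDF0 bE bB bF0 bW
      nn(2,1,5) pos(2) pr pos(3) dims(2)]
  note large = head_singular_values_large[OF svdU gap(2) nn(5)]
  obtain R Y where RY: "R \<in> carrier_mat r r" "Y \<in> carrier_mat m r" "C * Y = R" "R * L = L" "op_bound Y w0"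
    using svd_head_projector[OF svdU Ldef _ large nn(5)] dims by auto
  note err = trunc_svd_error[OF svdU Ldef]
  obtain X1 where X1: "X1 \<in> carrier_mat n r" "X1 * E = 1\<^sub>m n" "X1 * L = 0\<^sub>m n m"
    using left_factor_exists[OF A B E H C F err(1) RY(1,2) KXb(1,2) RY(3,4) bB bH bF RY(5) bE
        nn(1,3,5) small(1)] .
  have "g * s p \<le> 1/2" using mult_left_mono[OF gap(1) nn(4)] small(2) by simp
  then obtain W where W: "W \<in> carrier_mat m m" "W * (G * L + D * F) = 1\<^sub>m m"
    using right_factor_exists[OF G C err(1) D F KXb(4) bG nn(4) err(2)] by blast
  show ?thesis
    by (rule truncated_inverse_from_factors[OF A B G D E C H F err(1) X1(1) W(1) dims(3) N KX
          KXb(3) X1(2,3) W(2)])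
qed

lemma inverse_blocks_of_K0:
  fixes A G D :: "real mat"
  assumes A: "A \<in> carrier_mat n r" and G: "G \<in> carrier_mat m r" and D: "D \<in> carrier_mat m q"
    and N: "N = n + m" "N = r + q" and inv: "invertible_mat (four_block_mat A (0\<^sub>m n q) G D)"
  obtains K0i C0 F0 where "K0i \<in> carrier_mat N N" "four_block_mat A (0\<^sub>m n q) G D * K0i = 1\<^sub>m N"
    "C0 \<in> carrier_mat r m" "F0 \<in> carrier_mat q m"
    "C0 * D = 0\<^sub>m r q" "F0 * D = 1\<^sub>m q" "G * C0 + D * F0 = 1\<^sub>m m"
proof -
  have K0: "four_block_mat A (0\<^sub>m n q) G D \<in> carrier_mat N N"
    using four_block_carrier_mat[OF A D] unfolding N(1)[symmetric] N(2)[symmetric] .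
  obtain K0i where K0i: "K0i \<in> carrier_mat N N" "four_block_mat A (0\<^sub>m n q) G D * K0i = 1\<^sub>m N"
    "K0i * four_block_mat A (0\<^sub>m n q) G D = 1\<^sub>m N"
    using invertible_matE[OF inv K0] .
  obtain E0 C0 H0 F0 where sb: "split_block K0i r n = (E0, C0, H0, F0)" by (metis prod_cases4)
  have "dim_row K0i = r + q" "dim_col K0i = n + m" using K0i(1) N by auto
  note blocks = split_block[OF sb this]
  note right = four_block_mult_one[OF blocks(1-4) A zero_carrier_mat G D N(2) K0i(3)[unfolded blocks(5)]]
  note left = four_block_mult_one[OF A zero_carrier_mat G D blocks(1-4) N(1) K0i(2)[unfolded blocks(5)]]
  show ?thesis
  proof (rule that[OF K0i(1,2) blocks(2,4)])
    show "C0 * D = 0\<^sub>m r q" using right(2) blocks(1,2) D by simp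
    show "F0 * D = 1\<^sub>m q" using right(4) blocks(3,4) D by simp
    show "G * C0 + D * F0 = 1\<^sub>m m" by (rule left(4))
  qed
qed

lemma small_factor_exists:
  fixes a b c :: real
  assumes "0 \<le> a" "0 \<le> b" "0 \<le> c"
  obtains \<epsilon> where "0 < \<epsilon>" "\<epsilon> * a \<le> 1/2" "\<epsilon> * b \<le> 1/2" "\<epsilon> * c \<le> 1/2"
proof
  let ?\<epsilon> = "1 / (2 * (1 + a + b + c))"
  show "0 < ?\<epsilon>" using assms by simp
  show "?\<epsilon> * a \<le> 1/2" "?\<epsilon> * b \<le> 1/2" "?\<epsilon> * c \<le> 1/2" using assms by (simp_all add: field_simps)
qed

text \<open>For a fixed small \<open>B\<close>: the constants \<open>kE, kF, kH\<close> bound the blocks of \<open>K\<^sup>-\<^sup>1\<close>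
  (through \<open>\<parallel>K\<^sup>-\<^sup>1\<parallel> \<le> 2 c\<^sub>0\<close>), and the three smallness conditions on \<open>\<epsilon>\<close> are exactly those
  needed by \<open>perturbed_block_inverse\<close> and \<open>truncated_inverse_structure\<close>.\<close>

lemma small_perturbation_conclusion:
  fixes A B G D K0i C0 F0 :: "real mat"
  assumes A: "A \<in> carrier_mat n r" and G: "G \<in> carrier_mat m r" and D: "D \<in> carrier_mat m q"
    and dims: "r = n + p" "m = q + p" "N = n + m" and pos: "0 < n" "0 < p" "0 < q"
    and K0i: "K0i \<in> carrier_mat N N" "four_block_mat A (0\<^sub>m n q) G D * K0i = 1\<^sub>m N"
    and C0: "C0 \<in> carrier_mat r m" and F0: "F0 \<in> carrier_mat q m"
    and C0D: "C0 * D = 0\<^sub>m r q" and F0D: "F0 * D = 1\<^sub>m q" and GCDF0: "G * C0 + D * F0 = 1\<^sub>m m"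
    and c0: "0 \<le> c0" "op_bound K0i c0" and g: "0 \<le> g" "op_bound G g"
    and f0: "op_bound F0 f0" and w0: "0 \<le> w0" "op_bound (G * C0 * G) w0"
    and k: "kE = real r * real n * (2 * c0)" "kF = real q * real m * (2 * c0)" "kH = real q * real n * (2 * c0)"
    and \<epsilon>: "0 \<le> \<epsilon>" "\<epsilon> * (c0 * (real N * real N)) \<le> 1/2"
      "\<epsilon> * (kH + kF * w0 * kE) \<le> 1/2" "\<epsilon> * (g * kE * f0) \<le> 1/2"
    and B: "B \<in> carrier_mat n q" and sB: "spec_norm B \<le> \<epsilon>"
  shows "invertible_mat (four_block_mat A B G D) \<and>
           (\<forall>E C H F L.
              E \<in> carrier_mat r n \<longrightarrow> C \<in> carrier_mat r m \<longrightarrow>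
              H \<in> carrier_mat q n \<longrightarrow> F \<in> carrier_mat q m \<longrightarrow>
              four_block_mat A B G D * four_block_mat E C H F = 1\<^sub>m N \<longrightarrow>
              trunc_svd p C L \<longrightarrow>
              invertible_mat (four_block_mat E L H F) \<and>
              (\<exists>At Gt Dt. At \<in> carrier_mat n r \<and> Gt \<in> carrier_mat m r \<and>
                 Dt \<in> carrier_mat m q \<and>
                 four_block_mat E L H F * four_block_mat At (0\<^sub>m n q) Gt Dt = 1\<^sub>m N \<and>
                 four_block_mat At (0\<^sub>m n q) Gt Dt * four_block_mat E L H F = 1\<^sub>m N \<and>
                 B = A * (L - C) * Dt \<and>
                 A - At = A * (L - C) * Gt))"
proof -
  have N: "N = r + q" using dims by simp
  have bB: "op_bound B \<epsilon>" using op_bound_mono[OF op_bound_spec_norm sB] .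
  have "c0 * (real N * real N * \<epsilon>) \<le> 1/2" using \<epsilon>(2) by (simp add: mult_ac)
  note K = perturbed_block_inverse[OF A B G D dims(3) N K0i c0(2,1) bB \<epsilon>(1) this]
  have small: "\<epsilon> * kH + \<epsilon> * kF * w0 * kE \<le> 1/2" "g * (kE * \<epsilon> * f0) \<le> 1/2"
    using \<epsilon>(3,4) by (simp_all add: algebra_simps)
  have kn: "0 \<le> kE" "0 \<le> kF" unfolding k using c0 by auto
  show ?thesis
  proof (intro conjI[OF K(1)] allI impI)
    fix E C H F L
    assume E: "E \<in> carrier_mat r n" and C: "C \<in> carrier_mat r m" and H: "H \<in> carrier_mat q n"
      and F: "F \<in> carrier_mat q m" and KX: "four_block_mat A B G D * four_block_mat E C H F = 1\<^sub>m N"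
      and svd: "trunc_svd p C L"
    have "four_block_mat E C H F \<in> carrier_mat N N"
      using four_block_carrier_mat[OF E F] unfolding N[symmetric] dims(3)[symmetric] .
    note X = K(2)[OF this KX]
    note bX = op_bound_four_block_parts[OF E C H F conjunct2[OF X]]
    from truncated_inverse_structure[OF A B G D E C H F C0 F0 dims pos KX conjunct1[OF X] C0D F0D GCDF0
        bB bX(1)[folded k(1)] bX(3)[folded k(2)] bX(2)[folded k(3)] g(2) f0 w0(2) \<epsilon>(1) kn g(1) w0(1)
        small svd]
    show "invertible_mat (four_block_mat E L H F) \<and>
        (\<exists>At Gt Dt. At \<in> carrier_mat n r \<and> Gt \<in> carrier_mat m r \<and> Dt \<in> carrier_mat m q \<and>
           four_block_mat E L H F * four_block_mat At (0\<^sub>m n q) Gt Dt = 1\<^sub>m N \<and>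
           four_block_mat At (0\<^sub>m n q) Gt Dt * four_block_mat E L H F = 1\<^sub>m N \<and>
           B = A * (L - C) * Dt \<and> A - At = A * (L - C) * Gt)" .
  qed
qed

theorem mainTheorem3:
  fixes M n p :: nat and A G D :: "real mat"
  assumes "0 < M" "0 < n" "0 < p" "n + p < M"
    and "A \<in> carrier_mat n (n + p)"
    and "G \<in> carrier_mat (M - n) (n + p)"
    and "D \<in> carrier_mat (M - n) (M - n - p)"
    and "invertible_mat (four_block_mat A (0\<^sub>m n (M - n - p)) G D)"
  shows "\<exists>\<epsilon>0 > 0. \<forall>B \<in> carrier_mat n (M - n - p). spec_norm B \<le> \<epsilon>0 \<longrightarrow>
           invertible_mat (four_block_mat A B G D) \<and>
           (\<forall>E C H F L.
              E \<in> carrier_mat (n + p) n \<longrightarrow> C \<in> carrier_mat (n + p) (M - n) \<longrightarrow>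
              H \<in> carrier_mat (M - n - p) n \<longrightarrow> F \<in> carrier_mat (M - n - p) (M - n) \<longrightarrow>
              four_block_mat A B G D * four_block_mat E C H F = 1\<^sub>m M \<longrightarrow>
              trunc_svd p C L \<longrightarrow>
              invertible_mat (four_block_mat E L H F) \<and>
              (\<exists>At Gt Dt. At \<in> carrier_mat n (n + p) \<and> Gt \<in> carrier_mat (M - n) (n + p) \<and>
                 Dt \<in> carrier_mat (M - n) (M - n - p) \<and>
                 four_block_mat E L H F * four_block_mat At (0\<^sub>m n (M - n - p)) Gt Dt = 1\<^sub>m M \<and>
                 four_block_mat At (0\<^sub>m n (M - n - p)) Gt Dt * four_block_mat E L H F = 1\<^sub>m M \<and>
                 B = A * (L - C) * Dt \<and>
                 A - At = A * (L - C) * Gt))"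
proof -
  have dims: "M - n = (M - n - p) + p" "M = n + (M - n)" "M = (n + p) + (M - n - p)" "0 < M - n - p"
    using assms(4) by auto
  obtain K0i C0 F0 where K0i: "K0i \<in> carrier_mat M M" "four_block_mat A (0\<^sub>m n (M - n - p)) G D * K0i = 1\<^sub>m M"
    and C0: "C0 \<in> carrier_mat (n + p) (M - n)" and F0: "F0 \<in> carrier_mat (M - n - p) (M - n)"
    and K0: "C0 * D = 0\<^sub>m (n + p) (M - n - p)" "F0 * D = 1\<^sub>m (M - n - p)" "G * C0 + D * F0 = 1\<^sub>m (M - n)"
    using inverse_blocks_of_K0[OF assms(5-7) dims(2,3) assms(8)] .
  obtain c0 where c0: "0 \<le> c0" "op_bound K0i c0" using op_bound_exists by blast
  obtain g where g: "0 \<le> g" "op_bound G g" using op_bound_exists by blast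
  obtain f0 where f0: "0 \<le> f0" "op_bound F0 f0" using op_bound_exists by blast
  obtain w0 where w0: "0 \<le> w0" "op_bound (G * C0 * G) w0" using op_bound_exists by blast
  define kE kF kH where "kE = real (n + p) * real n * (2 * c0)"
    and "kF = real (M - n - p) * real (M - n) * (2 * c0)" and "kH = real (M - n - p) * real n * (2 * c0)"
  have "0 \<le> c0 * (real M * real M)" "0 \<le> kH + kF * w0 * kE" "0 \<le> g * kE * f0"
    using c0 g f0 w0 unfolding kE_def kF_def kH_def by auto
  then obtain \<epsilon> where \<epsilon>: "0 < \<epsilon>" "\<epsilon> * (c0 * (real M * real M)) \<le> 1/2"
    "\<epsilon> * (kH + kF * w0 * kE) \<le> 1/2" "\<epsilon> * (g * kE * f0) \<le> 1/2"
    by (rule small_factor_exists)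
  show ?thesis
    using small_perturbation_conclusion[OF assms(5-7) refl dims(1,2) assms(2,3) dims(4) K0i C0 F0 K0
        c0 g f0(2) w0 kE_def kF_def kH_def less_imp_le[OF \<epsilon>(1)] \<epsilon>(2-4)] \<epsilon>(1) by blast
qed

end
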